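(* Let $n\ge 2k\ge1$ and let $V$ be a set with $|V|=n$. Fix a sequence $x_1,y_1,\ldots,x_k,y_k$ of $2k$ distinct elements of $V$, for $0\le i\le k$ define $\phi_i:V^{(k)}\to\mathbb{R}$ by $\phi_i(A)=(-1)^{|A\cap\{y_1,\ldots,y_i\}|}$ if $|A\cap\{x_j,y_j\}|=1$ for all $j=1,\ldots,i$ and $\phi_i(A)=0$ otherwise, and let $V_i\subseteq\mathbb{R}^{V^{(k)}}$ be the linear span of $\{(\phi_i)_\pi:\pi\in S(V)\}$. Then: (a) For $i\ge1$ and $w:V^{(k)}\to\mathbb{R}$, $\operatorname{disc}(w,\phi_i)=0$ if and only if $w\in V_i^\perp$. (b) If $u\in V_i$ and $w\in V_j$ with $i\ne j$, then $\operatorname{disc}(u,w)=0$. (c) $\mathbb{R}^{V^{(k)}}$ is the direct sum $V_0\oplus\cdots\oplus V_k$. (d) If $u=u_0+\cdots+u_k$ with $u_i\in V_i$ for each $i$, and $(U_0,\ldots,U_k)$ is the $W$-vector of $u$, then for each $i=0,\ldots,k$ we have $U_i=0$ if and only if $u_i=\mathbf 0$. (e) If $w_1,\ldots,w_t:V^{(k)}\to\mathbb{R}$ are nonzero and satisfy $\operatorname{disc}(w_i,w_j)=0$ for all $i\ne j$, then there is a partition $[k]=I_1\cup\cdots\cup I_t$ (into pairwise disjoint, possibly empty, sets) such that $w_i\in V_0\oplus\bigoplus_{h\in I_i}V_h$ for each $i$.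
   Context: $V^{(k)}$ is the family of $k$-subsets of $V$; $S(V)$ is the symmetric group on $V$; $[k]=\{1,\dots,k\}$. Weightings $w:V^{(k)}\to\mathbb{R}$ carry the inner product $\langle w,u\rangle=\sum_{e}w(e)u(e)$ (orthogonal complements $\perp$ are taken with respect to it); $w(V)=\sum_e w(e)$, $d(w)=w(V)/\binom nk$, $w_\pi(e)=w(\pi^{-1}(e))$, and $\operatorname{disc}(w,u)=\max_{\pi\in S(V)}|\langle w_\pi,u\rangle-d(w)d(u)\binom nk|$. Note $\phi_0$ is the constant function $1$. $W$-vector (defined recursively on $k$): $W_0=|w(V)|/\binom nk$ (for $k=0$, $w$ is a single real number and $W_0=|w|$). For $k\ge1$ and distinct $x,y\in V$, $w^{xy}:(V\setminus\{x,y\})^{(k-1)}\to\mathbb{R}$ is $w^{xy}(e)=w(e\cup\{x\})-w(e\cup\{y\})$; with $(W^{xy}_0,\ldots,W^{xy}_{k-1})$ its $W$-vector, $W_i=\frac{1}{n(n-1)}\sum_{(x,y):\,x\ne y}W^{xy}_{i-1}$ for $1\le i\le k$ (average over ordered pairs of distinct vertices). *)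

theory Defs
  imports "HOL-Analysis.Analysis" "HOL-Library.Function_Algebras" "HOL-Combinatorics.Permutations"
begin

type_synonym 'a weighting = "'a set \<Rightarrow> real"

definition ksub :: "'a set \<Rightarrow> nat \<Rightarrow> 'a set set" where
  "ksub V k = {e. e \<subseteq> V \<and> card e = k}"

text \<open>Weightings of V^(k), represented as functions vanishing off V^(k).\<close>
definition WS :: "'a set \<Rightarrow> nat \<Rightarrow> 'a weighting set" where
  "WS V k = {w. \<forall>e. e \<notin> ksub V k \<longrightarrow> w e = 0}"

definition ip :: "'a set \<Rightarrow> nat \<Rightarrow> 'a weighting \<Rightarrow> 'a weighting \<Rightarrow> real" where
  "ip V k w u = (\<Sum>e\<in>ksub V k. w e * u e)"

definition wsum :: "'a set \<Rightarrow> nat \<Rightarrow> 'a weighting \<Rightarrow> real" where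
  "wsum V k w = (\<Sum>e\<in>ksub V k. w e)"

definition dens :: "'a set \<Rightarrow> nat \<Rightarrow> 'a weighting \<Rightarrow> real" where
  "dens V k w = wsum V k w / real (card V choose k)"

definition wperm :: "('a \<Rightarrow> 'a) \<Rightarrow> 'a weighting \<Rightarrow> 'a weighting" where
  "wperm \<pi> w = (\<lambda>e. w (inv \<pi> ` e))"

definition disc :: "'a set \<Rightarrow> nat \<Rightarrow> 'a weighting \<Rightarrow> 'a weighting \<Rightarrow> real" where
  "disc V k w u = Max ((\<lambda>\<pi>. \<bar>ip V k (wperm \<pi> w) u - dens V k w * dens V k u * real (card V choose k)\<bar>)
                        ` {\<pi>. \<pi> permutes V})"

definition fscale :: "real \<Rightarrow> 'a weighting \<Rightarrow> 'a weighting" where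
  "fscale c f = (\<lambda>e. c * f e)"

definition wspan :: "'a weighting set \<Rightarrow> 'a weighting set" where
  "wspan S = module.span fscale S"

definition orth :: "'a set \<Rightarrow> nat \<Rightarrow> 'a weighting set \<Rightarrow> 'a weighting set" where
  "orth V k S = {w \<in> WS V k. \<forall>u\<in>S. ip V k w u = 0}"

definition phi :: "'a set \<Rightarrow> nat \<Rightarrow> (nat \<Rightarrow> 'a) \<Rightarrow> (nat \<Rightarrow> 'a) \<Rightarrow> nat \<Rightarrow> 'a weighting" where
  "phi V k x y i A =
     (if A \<in> ksub V k \<and> (\<forall>j\<in>{1..i}. card (A \<inter> {x j, y j}) = 1)
      then (-1) ^ card (A \<inter> y ` {1..i}) else 0)"

definition Vsp :: "'a set \<Rightarrow> nat \<Rightarrow> (nat \<Rightarrow> 'a) \<Rightarrow> (nat \<Rightarrow> 'a) \<Rightarrow> nat \<Rightarrow> 'a weighting set" where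
  "Vsp V k x y i = wspan {wperm \<pi> (phi V k x y i) | \<pi>. \<pi> permutes V}"

definition Vsum :: "'a set \<Rightarrow> nat \<Rightarrow> (nat \<Rightarrow> 'a) \<Rightarrow> (nat \<Rightarrow> 'a) \<Rightarrow> nat set \<Rightarrow> 'a weighting set" where
  "Vsum V k x y S = {v. \<exists>u. (\<forall>h\<in>S. u h \<in> Vsp V k x y h) \<and> v = (\<Sum>h\<in>S. u h)}"

text \<open>W-vector: Wv k V w i is W_i of w : V^(k) -> R (meaningful for i \<le> k).\<close>
fun Wv :: "nat \<Rightarrow> 'a set \<Rightarrow> 'a weighting \<Rightarrow> nat \<Rightarrow> real" where
  "Wv k V w 0 = \<bar>wsum V k w\<bar> / real (card V choose k)"
| "Wv 0 V w (Suc i) = 0"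
| "Wv (Suc k) V w (Suc i) =
     (\<Sum>p\<in>{(a, b). a \<in> V \<and> b \<in> V \<and> a \<noteq> b}.
        Wv k (V - {fst p, snd p}) (\<lambda>e. w (insert (fst p) e) - w (insert (snd p) e)) i)
     / (real (card V) * (real (card V) - 1))"

end

theory Submission
  imports Defs
begin

(* The weightings of V^(k) split orthogonally into levels V_0, ..., V_k, where V_h is spanned
   by the products of h differences [a \<in> A] - [b \<in> A] over disjoint pairs (a, b), i.e. by the
   permuted copies of phi_h. Distinct levels are orthogonal because differencing along h pairs
   kills every polynomial of degree below h; the levels span everything because a weighting
   orthogonal to all of them is invariant under exchanging elements, hence constant, hence zero.
   Each level is permutation invariant and, for h \<ge> 1, orthogonal to the constants, which turns
   (a)-(d) into statements about orthogonality. For (e), antisymmetrising a permuted copy of w_i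
   along h pairs isolates the product of the level-h coefficients of w_i and w_j at the top level
   where both are nonzero; vanishing discrepancy forces this product to be zero, so distinct w_i
   share no nonzero level h \<ge> 1. *)

section \<open>Weightings as a real vector space\<close>

global_interpretation weighting: module fscale
  by standard (auto simp: fscale_def fun_eq_iff algebra_simps)

lemma fscale_apply: "fscale c f e = c * f e"
  by (simp add: fscale_def)

lemma sum_fun_apply: "(\<Sum>h\<in>A. f h) e = (\<Sum>h\<in>A. (f h e :: real))"
  by (induction A rule: infinite_finite_induct) auto

lemma finite_ksub: "finite V \<Longrightarrow> finite (ksub V k)"
  by (simp add: ksub_def)

lemma card_ksub: "finite V \<Longrightarrow> card (ksub V k) = card V choose k"
  unfolding ksub_def by (rule n_subsets)

lemma finite_ksub_member: "finite V \<Longrightarrow> e \<in> ksub V k \<Longrightarrow> finite e"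
  by (auto simp: ksub_def intro: finite_subset)

lemma ksub_0: "finite V \<Longrightarrow> ksub V 0 = {{}}"
  by (auto simp: ksub_def dest: finite_subset)

lemma WS_subspace: "weighting.subspace (WS V k)"
  by (auto simp: weighting.subspace_def WS_def fscale_apply)

lemma ip_diff_left: "ip V k (f - g) u = ip V k f u - ip V k g u"
  by (simp add: ip_def algebra_simps sum_subtractf)

lemma ip_scale_left: "ip V k (fscale c f) u = c * ip V k f u"
  by (simp add: ip_def fscale_apply sum_distrib_left algebra_simps)

lemma ip_sum_left: "ip V k (\<Sum>h\<in>A. f h) u = (\<Sum>h\<in>A. ip V k (f h) u)"
  by (simp add: ip_def sum_fun_apply sum_distrib_right) (rule sum.swap)

lemma ip_zero_left [simp]: "ip V k 0 u = 0"
  by (simp add: ip_def)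

lemma ip_zero_right [simp]: "ip V k u 0 = 0"
  by (simp add: ip_def)

lemma ip_comm: "ip V k f g = ip V k g f"
  by (simp add: ip_def mult.commute)

lemma ip_diff_right: "ip V k u (f - g) = ip V k u f - ip V k u g"
  by (simp add: ip_def algebra_simps sum_subtractf)

lemma ip_cong:
  "(\<And>e. e \<in> ksub V k \<Longrightarrow> f e = f' e) \<Longrightarrow> (\<And>e. e \<in> ksub V k \<Longrightarrow> g e = g' e)
   \<Longrightarrow> ip V k f g = ip V k f' g'"
  by (simp add: ip_def)

lemma ip_self_eq_0_imp_zero:
  assumes "finite V" "w \<in> WS V k" "ip V k w w = 0"
  shows "w = 0"
proof -
  have "\<forall>e\<in>ksub V k. w e * w e = 0"
    using assms(3) unfolding ip_def
    by (subst (asm) sum_nonneg_eq_0_iff) (auto simp: finite_ksub assms(1))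
  then show ?thesis
    using assms(2) unfolding WS_def by (auto simp: fun_eq_iff)
qed

lemma ip_eq_0_on_span:
  assumes "v \<in> weighting.span S" "\<And>g. g \<in> S \<Longrightarrow> ip V k u g = 0"
  shows "ip V k u v = 0"
  using assms(1)
proof (induction rule: weighting.span_induct_alt)
  case base
  then show ?case by (simp add: ip_def)
next
  case (step c x y)
  have "ip V k u (fscale c x + y) = c * ip V k u x + ip V k u y"
    by (simp add: ip_def fscale_apply sum.distrib sum_distrib_left algebra_simps)
  also have "\<dots> = 0"
    using step assms(2) by simp
  finally show ?case .
qed

lemma ip_eq_0_on_spans:
  assumes "u \<in> weighting.span S" "v \<in> weighting.span T"
    and "\<And>f g. f \<in> S \<Longrightarrow> g \<in> T \<Longrightarrow> ip V k f g = 0"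
  shows "ip V k u v = 0"
proof -
  have "ip V k v f = 0" if "f \<in> S" for f
    using ip_eq_0_on_span[OF assms(2)] assms(3) that by (metis ip_comm)
  then show ?thesis
    using ip_eq_0_on_span[OF assms(1)] ip_comm by metis
qed

lemma ip_orth_span_iff:
  "(\<forall>v\<in>weighting.span S. ip V k w v = 0) \<longleftrightarrow> (\<forall>g\<in>S. ip V k w g = 0)"
  using ip_eq_0_on_span weighting.span_base by blast

abbreviation linear_weighting :: "('a weighting \<Rightarrow> 'b weighting) \<Rightarrow> bool" where
  "linear_weighting \<equiv> module_hom fscale fscale"

lemma linear_weightingI:
  assumes "\<And>f g. L (f + g) = L f + L g" "\<And>c f. L (fscale c f) = fscale c (L f)"
  shows "linear_weighting L"
  using assms by unfold_locales auto

lemma linear_weighting_span: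
  assumes "linear_weighting L" "weighting.subspace T" "\<And>g. g \<in> S \<Longrightarrow> L g \<in> T"
    and "x \<in> weighting.span S"
  shows "L x \<in> T"
  using weighting.span_subspace_induct[OF assms(4) module_hom.subspace_vimage[OF assms(1,2)]] assms(3)
  by auto

lemma orth_projection_step:
  assumes "finite V" "r \<in> WS V k" "\<forall>h\<in>G. ip V k r h = 0" "\<forall>h\<in>G. ip V k (w - s) h = 0"
  shows "\<exists>c. \<forall>h\<in>insert r G. ip V k (w - (s + fscale c r)) h = 0"
proof (cases "ip V k r r = 0")
  case True
  then have "r = 0" using ip_self_eq_0_imp_zero[OF assms(1,2)] by simp
  then show ?thesis using assms(4) by (intro exI[of _ 0]) (simp add: weighting.scale_zero_left)
next
  case False
  define c where "c = ip V k (w - s) r / ip V k r r"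
  have "ip V k (w - (s + fscale c r)) h = ip V k (w - s) h - c * ip V k r h" for h
    by (simp add: diff_add_eq_diff_diff_swap ip_diff_left ip_scale_left)
  then show ?thesis using assms(3,4) False by (intro exI[of _ c]) (simp add: c_def)
qed

lemma exists_orth_projection:
  assumes "finite V" "finite G" "G \<subseteq> WS V k"
  shows "\<exists>s\<in>weighting.span G. \<forall>g\<in>G. ip V k (w - s) g = 0"
  using assms(2,3)
proof (induction G arbitrary: w rule: finite_induct)
  case empty
  then show ?case by (meson weighting.span_zero empty_iff)
next
  case (insert g G)
  obtain s1 where s1: "s1 \<in> weighting.span G" "\<forall>h\<in>G. ip V k (w - s1) h = 0"
    using insert.IH[of w] insert.prems by blast
  obtain s2 where s2: "s2 \<in> weighting.span G" "\<forall>h\<in>G. ip V k (g - s2) h = 0"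
    using insert.IH[of g] insert.prems by blast
  have "s2 \<in> WS V k"
    using s2(1) weighting.span_minimal[OF _ WS_subspace] insert.prems by blast
  then have "g - s2 \<in> WS V k"
    using insert.prems by (auto simp: WS_def)
  then obtain c where c: "\<forall>h\<in>insert (g - s2) G. ip V k (w - (s1 + fscale c (g - s2))) h = 0"
    using orth_projection_step[OF assms(1) _ s2(2) s1(2)] by blast
  define s where "s = s1 + fscale c (g - s2)"
  have "ip V k (w - s) s2 = 0"
    using ip_eq_0_on_span[OF s2(1)] c by (simp add: s_def)
  then have "ip V k (w - s) g = 0"
    using c ip_diff_right[of V k "w - s" g s2] by (simp add: s_def)
  moreover have "s \<in> weighting.span (insert g G)"
  proof -
    have "weighting.span G \<subseteq> weighting.span (insert g G)" by (rule weighting.span_mono) auto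
    moreover have "g \<in> weighting.span (insert g G)" by (rule weighting.span_base) simp
    ultimately show ?thesis
      unfolding s_def using s1(1) s2(1)
      by (intro weighting.span_add weighting.span_scale weighting.span_diff) blast+
  qed
  ultimately show ?case using c unfolding s_def by blast
qed

section \<open>Weightings given by disjoint pairs\<close>

(* For the pairs (x j, y j), j = 1..i, pair_phi is the paper's phi_i (lemma phi_eq_pair_phi). *)

fun pair_sign :: "('a \<times> 'a) list \<Rightarrow> 'a set \<Rightarrow> real" where
  "pair_sign [] A = 1"
| "pair_sign ((a, b) # ps) A = (indicator A a - indicator A b) * pair_sign ps A"

definition pair_phi :: "'a set \<Rightarrow> nat \<Rightarrow> ('a \<times> 'a) list \<Rightarrow> 'a weighting" where
  "pair_phi V k ps = (\<lambda>A. if A \<in> ksub V k then pair_sign ps A else 0)"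

fun flat_pairs :: "('a \<times> 'a) list \<Rightarrow> 'a list" where
  "flat_pairs [] = []"
| "flat_pairs ((a, b) # ps) = a # b # flat_pairs ps"

abbreviation pair_elems :: "('a \<times> 'a) list \<Rightarrow> 'a set" where
  "pair_elems ps \<equiv> set (flat_pairs ps)"

definition distinct_pairs :: "'a set \<Rightarrow> ('a \<times> 'a) list \<Rightarrow> bool" where
  "distinct_pairs V ps \<longleftrightarrow> distinct (flat_pairs ps) \<and> pair_elems ps \<subseteq> V"

definition pair_phis :: "'a set \<Rightarrow> nat \<Rightarrow> nat \<Rightarrow> 'a weighting set" where
  "pair_phis V k h = {pair_phi V k ps | ps. distinct_pairs V ps \<and> length ps = h}"

definition level_space :: "'a set \<Rightarrow> nat \<Rightarrow> nat \<Rightarrow> 'a weighting set" where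
  "level_space V k h = weighting.span (pair_phis V k h)"

lemma pair_phi_WS: "pair_phi V k ps \<in> WS V k"
  by (simp add: pair_phi_def WS_def)

lemma pair_phi_level_space:
  "distinct_pairs V ps \<Longrightarrow> pair_phi V k ps \<in> level_space V k (length ps)"
  unfolding level_space_def by (rule weighting.span_base) (auto simp: pair_phis_def)

lemma level_space_subspace: "weighting.subspace (level_space V k h)"
  unfolding level_space_def by (rule weighting.subspace_span)

lemma pair_phis_WS: "pair_phis V k h \<subseteq> WS V k"
  by (auto simp: pair_phis_def pair_phi_WS)

lemma level_space_WS: "level_space V k h \<subseteq> WS V k"
  unfolding level_space_def by (rule weighting.span_minimal[OF pair_phis_WS WS_subspace])

lemma wsum_eq_ip_pair_phi_Nil: "wsum V k f = ip V k f (pair_phi V k [])"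
  by (simp add: wsum_def ip_def pair_phi_def)

lemma length_flat_pairs: "length (flat_pairs ps) = 2 * length ps"
  by (induction ps rule: flat_pairs.induct) auto

lemma flat_pairs_append: "flat_pairs (ps @ qs) = flat_pairs ps @ flat_pairs qs"
  by (induction ps rule: flat_pairs.induct) auto

lemma flat_pairs_map: "flat_pairs (map (map_prod f f) ps) = map f (flat_pairs ps)"
  by (induction ps rule: flat_pairs.induct) auto

lemma flat_pairs_inject:
  "length ps = length qs \<Longrightarrow> flat_pairs ps = flat_pairs qs \<Longrightarrow> ps = qs"
proof (induction ps arbitrary: qs rule: flat_pairs.induct)
  case (2 a b ps)
  then show ?case by (cases qs) auto
qed simp

lemma distinct_pairs_Nil [simp]: "distinct_pairs V []"
  by (simp add: distinct_pairs_def)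

lemma distinct_pairs_Cons:
  "distinct_pairs V ((a, b) # ps) \<longleftrightarrow>
     a \<in> V \<and> b \<in> V \<and> a \<noteq> b \<and> a \<notin> pair_elems ps \<and> b \<notin> pair_elems ps
     \<and> distinct_pairs (V - {a, b}) ps"
  by (auto simp: distinct_pairs_def)

lemma distinct_pairs_append:
  "distinct_pairs V (ps @ qs) \<longleftrightarrow> distinct_pairs V ps \<and> distinct_pairs (V - pair_elems ps) qs"
  by (auto simp: distinct_pairs_def flat_pairs_append)

lemma distinct_pairs_subset: "distinct_pairs V ps \<Longrightarrow> set ps \<subseteq> V \<times> V"
  by (induction ps arbitrary: V rule: flat_pairs.induct) (auto simp: distinct_pairs_Cons)

lemma distinct_pairs_neq: "distinct_pairs V ps \<Longrightarrow> \<forall>(a, b)\<in>set ps. a \<noteq> b"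
  by (induction ps arbitrary: V rule: flat_pairs.induct) (auto simp: distinct_pairs_Cons)

lemma card_Diff_pair_elems:
  assumes "finite V" "distinct_pairs V ps"
  shows "card (V - pair_elems ps) = card V - 2 * length ps"
  using assms by (simp add: distinct_pairs_def card_Diff_subset finite_subset distinct_card
      length_flat_pairs)

lemma all_distinct_pairs_Suc:
  "(\<forall>ps. distinct_pairs V ps \<and> length ps = Suc i \<longrightarrow> P ps) \<longleftrightarrow>
   (\<forall>a b qs. a \<in> V \<and> b \<in> V \<and> a \<noteq> b \<and> distinct_pairs (V - {a, b}) qs \<and> length qs = i
      \<longrightarrow> P ((a, b) # qs))"
  (is "?lhs \<longleftrightarrow> ?rhs")
proof
  assume lhs: ?lhs
  show ?rhs
  proof (intro allI impI)
    fix a b qs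
    assume "a \<in> V \<and> b \<in> V \<and> a \<noteq> b \<and> distinct_pairs (V - {a, b}) qs \<and> length qs = i"
    then show "P ((a, b) # qs)"
      using lhs[rule_format, of "(a, b) # qs"] by (auto simp: distinct_pairs_Cons distinct_pairs_def)
  qed
next
  assume rhs: ?rhs
  show ?lhs
  proof (intro allI impI)
    fix ps assume ps: "distinct_pairs V ps \<and> length ps = Suc i"
    then obtain a b qs where "ps = (a, b) # qs" by (cases ps) auto
    with ps rhs show "P ps" by (auto simp: distinct_pairs_Cons)
  qed
qed

lemma finite_pair_phis: "finite V \<Longrightarrow> finite (pair_phis V k h)"
proof -
  assume "finite V"
  then have "finite {ps. set ps \<subseteq> V \<times> V \<and> length ps = h}"
    by (intro finite_lists_length_eq) auto
  then have "finite {ps. distinct_pairs V ps \<and> length ps = h}"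
    by (rule finite_subset[rotated]) (auto dest: distinct_pairs_subset)
  moreover have "pair_phis V k h = pair_phi V k ` {ps. distinct_pairs V ps \<and> length ps = h}"
    by (auto simp: pair_phis_def)
  ultimately show ?thesis by simp
qed

lemma image_ksub_bij:
  assumes "\<pi> permutes V"
  shows "bij_betw ((`) \<pi>) (ksub V k) (ksub V k)"
proof (rule bij_betw_byWitness[where f' = "(`) (inv \<pi>)"])
  have inj: "inj \<pi>" "inj (inv \<pi>)"
    using permutes_inj[OF assms] permutes_inj[OF permutes_inv[OF assms]] by auto
  show "\<forall>e\<in>ksub V k. inv \<pi> ` \<pi> ` e = e" "\<forall>e\<in>ksub V k. \<pi> ` inv \<pi> ` e = e"
    using inj(1) permutes_surj[OF assms] by (auto simp: image_comp surj_iff)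
  show "(`) \<pi> ` ksub V k \<subseteq> ksub V k" "(`) (inv \<pi>) ` ksub V k \<subseteq> ksub V k"
    using inj permutes_in_image[OF assms] permutes_in_image[OF permutes_inv[OF assms]]
    by (auto simp: ksub_def card_image inj_on_subset)
qed

lemma ksub_perm_iff:
  assumes "\<pi> permutes V"
  shows "\<pi> ` e \<in> ksub V k \<longleftrightarrow> e \<in> ksub V k"
proof
  assume "\<pi> ` e \<in> ksub V k"
  then have "inv \<pi> ` \<pi> ` e \<in> ksub V k"
    using image_ksub_bij[OF permutes_inv[OF assms]] by (auto simp: bij_betw_def)
  then show "e \<in> ksub V k"
    using permutes_inj[OF assms] by (simp add: image_comp)
qed (use image_ksub_bij[OF assms] in \<open>auto simp: bij_betw_def\<close>)

lemma ip_wperm: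
  assumes "\<pi> permutes V"
  shows "ip V k (wperm \<pi> w) u = ip V k w (wperm (inv \<pi>) u)"
proof -
  have "ip V k (wperm \<pi> w) u = (\<Sum>e\<in>ksub V k. w (inv \<pi> ` e) * u e)"
    by (simp add: ip_def wperm_def)
  also have "\<dots> = (\<Sum>e\<in>ksub V k. w (inv \<pi> ` \<pi> ` e) * u (\<pi> ` e))"
    by (rule sum.reindex_bij_betw[symmetric, OF image_ksub_bij[OF assms]])
  also have "\<dots> = ip V k w (wperm (inv \<pi>) u)"
    using permutes_inj[OF assms] by (simp add: ip_def wperm_def image_comp permutes_inv_inv[OF assms])
  finally show ?thesis .
qed

lemma wperm_wperm:
  assumes "\<pi> permutes V" "\<sigma> permutes V"
  shows "wperm \<pi> (wperm \<sigma> w) = wperm (\<pi> \<circ> \<sigma>) w"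
  using assms by (simp add: wperm_def fun_eq_iff image_comp o_inv_distrib permutes_bij)

lemma linear_wperm: "linear_weighting (wperm \<pi>)"
  by (rule linear_weightingI) (simp_all add: wperm_def fscale_apply fun_eq_iff)

lemma pair_sign_inv_image:
  assumes "\<pi> permutes V"
  shows "pair_sign ps (inv \<pi> ` A) = pair_sign (map (map_prod \<pi> \<pi>) ps) A"
proof -
  have "a \<in> inv \<pi> ` A \<longleftrightarrow> \<pi> a \<in> A" for a
    using permutes_inverses[OF assms] by (metis image_iff)
  then show ?thesis
    by (induction ps rule: flat_pairs.induct) (auto simp: indicator_def)
qed

lemma wperm_pair_phi:
  assumes "\<pi> permutes V"
  shows "wperm \<pi> (pair_phi V k ps) = pair_phi V k (map (map_prod \<pi> \<pi>) ps)"
  using ksub_perm_iff[OF permutes_inv[OF assms]] pair_sign_inv_image[OF assms]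
  by (simp add: wperm_def pair_phi_def fun_eq_iff)

lemma distinct_pairs_map:
  assumes "\<pi> permutes V" "distinct_pairs V ps"
  shows "distinct_pairs V (map (map_prod \<pi> \<pi>) ps)"
  using assms permutes_inj[OF assms(1)] permutes_in_image[OF assms(1)]
  by (auto simp: distinct_pairs_def flat_pairs_map distinct_map inj_on_subset)

lemma level_space_wperm:
  assumes "\<pi> permutes V" "u \<in> level_space V k h"
  shows "wperm \<pi> u \<in> level_space V k h"
  using linear_wperm weighting.subspace_span _ assms(2)[unfolded level_space_def]
  unfolding level_space_def
proof (rule linear_weighting_span)
  fix g assume "g \<in> pair_phis V k h"
  then have "wperm \<pi> g \<in> pair_phis V k h"
    using wperm_pair_phi[OF assms(1)] distinct_pairs_map[OF assms(1)] by (auto simp: pair_phis_def)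
  then show "wperm \<pi> g \<in> weighting.span (pair_phis V k h)"
    by (rule weighting.span_base)
qed

lemma exists_permutes_map:
  assumes "distinct xs" "distinct ys" "set xs \<subseteq> V" "set ys \<subseteq> V" "length xs = length ys"
  shows "\<exists>\<pi>. \<pi> permutes V \<and> map \<pi> xs = ys"
  using assms
proof (induction xs arbitrary: ys)
  case Nil
  then show ?case by (auto intro: permutes_id)
next
  case (Cons x xs)
  then obtain y ys' where ys: "ys = y # ys'" by (cases ys) auto
  with Cons obtain \<pi> where \<pi>: "\<pi> permutes V" "map \<pi> xs = ys'" by auto
  define \<sigma> where "\<sigma> = Transposition.transpose y (\<pi> x) \<circ> \<pi>"
  have "\<pi> x \<in> V" using \<pi>(1) Cons.prems permutes_in_image by fastforce
  then have \<sigma>_permutes: "\<sigma> permutes V"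
    unfolding \<sigma>_def using Cons.prems ys by (intro permutes_compose \<pi>(1) permutes_swap_id) auto
  have "\<sigma> z = \<pi> z" if "z \<in> set xs" for z
  proof -
    have "\<pi> z \<in> set ys'" "\<pi> z \<noteq> \<pi> x"
      using \<pi> Cons.prems that permutes_inj[OF \<pi>(1)] by (auto dest: injD)
    moreover have "\<pi> z \<noteq> y"
      using calculation Cons.prems ys by auto
    ultimately show ?thesis by (simp add: \<sigma>_def transpose_apply_other)
  qed
  then have "map \<sigma> (x # xs) = ys"
    using \<pi>(2) ys by (auto simp: \<sigma>_def)
  with \<sigma>_permutes show ?case by blast
qed

lemma exists_permutes_map_pairs:
  assumes "distinct_pairs V ps" "distinct_pairs V qs" "length ps = length qs"
  shows "\<exists>\<pi>. \<pi> permutes V \<and> map (map_prod \<pi> \<pi>) ps = qs"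
proof -
  obtain \<pi> where "\<pi> permutes V" "map \<pi> (flat_pairs ps) = flat_pairs qs"
    using exists_permutes_map[of "flat_pairs ps" "flat_pairs qs" V] assms
    by (auto simp: distinct_pairs_def length_flat_pairs)
  then show ?thesis
    using flat_pairs_inject[of "map (map_prod \<pi> \<pi>) ps" qs] assms(3) by (auto simp: flat_pairs_map)
qed

section \<open>Differences along pairs\<close>

definition pair_diff :: "'a \<Rightarrow> 'a \<Rightarrow> 'a weighting \<Rightarrow> 'a weighting" where
  "pair_diff a b w = (\<lambda>B. w (insert a (B - {b})) - w (insert b (B - {a})))"

definition pair_lift :: "'a \<Rightarrow> 'a \<Rightarrow> 'a weighting \<Rightarrow> 'a weighting" where
  "pair_lift a b g = (\<lambda>A. (indicator A a - indicator A b) * g (A - {a, b}))"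

fun iter_diff :: "('a \<times> 'a) list \<Rightarrow> 'a weighting \<Rightarrow> 'a weighting" where
  "iter_diff [] w = w"
| "iter_diff ((a, b) # ps) w = iter_diff ps (pair_diff a b w)"

lemma linear_pair_diff: "linear_weighting (pair_diff a b)"
  by (rule linear_weightingI) (simp_all add: pair_diff_def fscale_apply fun_eq_iff algebra_simps)

lemma linear_iter_diff: "linear_weighting (iter_diff ps)"
proof (induction ps rule: flat_pairs.induct)
  case 1
  show ?case by (rule linear_weightingI) (simp_all add: fun_eq_iff)
next
  case (2 a b ps)
  have "iter_diff ((a, b) # ps) = iter_diff ps \<circ> pair_diff a b" by (simp add: fun_eq_iff)
  then show ?case by (simp only: module_hom_compose[OF linear_pair_diff 2])
qed

lemma bij_betw_insert_ksub:
  assumes "finite V" "a \<in> V" "b \<in> V" "a \<noteq> b"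
  shows "bij_betw (insert a) (ksub (V - {a, b}) k) {A \<in> ksub V (Suc k). a \<in> A \<and> b \<notin> A}"
proof (rule bij_betw_byWitness[where f' = "\<lambda>A. A - {a}"])
  show "\<forall>B\<in>ksub (V - {a, b}) k. insert a B - {a} = B" by (auto simp: ksub_def)
  show "\<forall>A\<in>{A \<in> ksub V (Suc k). a \<in> A \<and> b \<notin> A}. insert a (A - {a}) = A" by auto
  show "insert a ` ksub (V - {a, b}) k \<subseteq> {A \<in> ksub V (Suc k). a \<in> A \<and> b \<notin> A}"
  proof
    fix A assume "A \<in> insert a ` ksub (V - {a, b}) k"
    then obtain B where B: "B \<in> ksub (V - {a, b}) k" "A = insert a B" by auto
    have "finite B" using B(1) assms(1) by (auto simp: ksub_def intro: finite_subset)
    moreover have "a \<notin> B" using B(1) by (auto simp: ksub_def)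
    ultimately show "A \<in> {A \<in> ksub V (Suc k). a \<in> A \<and> b \<notin> A}"
      using B assms by (auto simp: ksub_def)
  qed
  show "(\<lambda>A. A - {a}) ` {A \<in> ksub V (Suc k). a \<in> A \<and> b \<notin> A} \<subseteq> ksub (V - {a, b}) k"
  proof
    fix B assume "B \<in> (\<lambda>A. A - {a}) ` {A \<in> ksub V (Suc k). a \<in> A \<and> b \<notin> A}"
    then obtain A where A: "A \<in> ksub V (Suc k)" "a \<in> A" "b \<notin> A" "B = A - {a}" by auto
    have "finite A" using A(1) assms(1) by (auto simp: ksub_def intro: finite_subset)
    then show "B \<in> ksub (V - {a, b}) k" using A by (auto simp: ksub_def)
  qed
qed

lemma sum_ksub_Suc_insert:
  assumes "finite V" "a \<in> V" "b \<in> V" "a \<noteq> b"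
  shows "(\<Sum>A\<in>ksub V (Suc k). if a \<in> A \<and> b \<notin> A then F A else 0)
       = (\<Sum>B\<in>ksub (V - {a, b}) k. F (insert a B))"
proof -
  have "(\<Sum>A\<in>ksub V (Suc k). if a \<in> A \<and> b \<notin> A then F A else 0)
      = (\<Sum>A\<in>{A \<in> ksub V (Suc k). a \<in> A \<and> b \<notin> A}. F A)"
    by (simp add: sum.inter_filter finite_ksub assms(1))
  also have "\<dots> = (\<Sum>B\<in>ksub (V - {a, b}) k. F (insert a B))"
    by (rule sum.reindex_bij_betw[symmetric, OF bij_betw_insert_ksub[OF assms]])
  finally show ?thesis .
qed

lemma ip_pair_lift:
  assumes "finite V" "a \<in> V" "b \<in> V" "a \<noteq> b"
  shows "ip V (Suc k) w (pair_lift a b g) = ip (V - {a, b}) k (pair_diff a b w) g"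
proof -
  have split: "w A * ((indicator A a - indicator A b) * g (A - {a, b}))
      = (if a \<in> A \<and> b \<notin> A then w A * g (A - {a, b}) else 0)
      - (if b \<in> A \<and> a \<notin> A then w A * g (A - {b, a}) else 0)" for A
    by (auto simp: insert_commute)
  have "ip V (Suc k) w (pair_lift a b g)
      = (\<Sum>A\<in>ksub V (Suc k). if a \<in> A \<and> b \<notin> A then w A * g (A - {a, b}) else 0)
      - (\<Sum>A\<in>ksub V (Suc k). if b \<in> A \<and> a \<notin> A then w A * g (A - {b, a}) else 0)"
    unfolding ip_def pair_lift_def split by (simp add: sum_subtractf)
  also have "\<dots> = (\<Sum>B\<in>ksub (V - {a, b}) k. w (insert a B) * g (insert a B - {a, b}))
      - (\<Sum>B\<in>ksub (V - {b, a}) k. w (insert b B) * g (insert b B - {b, a}))"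
    using sum_ksub_Suc_insert[OF assms, where F = "\<lambda>A. w A * g (A - {a, b})"]
      sum_ksub_Suc_insert[OF assms(1,3,2) assms(4)[symmetric], where F = "\<lambda>A. w A * g (A - {b, a})"]
    by (simp only:)
  also have "\<dots> = (\<Sum>B\<in>ksub (V - {a, b}) k. (w (insert a B) - w (insert b B)) * g B)"
  proof -
    have "insert a B - {a, b} = B" "insert b B - {b, a} = B" if "B \<in> ksub (V - {a, b}) k" for B
      using that by (auto simp: ksub_def)
    then show ?thesis by (simp add: insert_commute sum_subtractf algebra_simps)
  qed
  also have "\<dots> = ip (V - {a, b}) k (pair_diff a b w) g"
  proof -
    have "insert a (B - {b}) = insert a B" "insert b (B - {a}) = insert b B"
      if "B \<in> ksub (V - {a, b}) k" for B
      using that by (auto simp: ksub_def)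
    then show ?thesis unfolding ip_def pair_diff_def by (intro sum.cong) auto
  qed
  finally show ?thesis .
qed

lemma pair_sign_Diff: "pair_elems ps \<inter> X = {} \<Longrightarrow> pair_sign ps (A - X) = pair_sign ps A"
  by (induction ps rule: flat_pairs.induct) (auto simp: indicator_def)

lemma pair_phi_Cons:
  assumes "finite V" "distinct_pairs V ((a, b) # ps)" "A \<in> ksub V (Suc k)"
  shows "pair_phi V (Suc k) ((a, b) # ps) A = pair_lift a b (pair_phi (V - {a, b}) k ps) A"
proof (cases "a \<in> A \<longleftrightarrow> b \<in> A")
  case True
  then show ?thesis using assms by (auto simp: pair_phi_def pair_lift_def)
next
  case False
  have "A - {a, b} \<in> ksub (V - {a, b}) k"
    using False assms(3) finite_ksub_member[OF assms(1,3)]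
    by (auto simp: ksub_def card_Diff_subset_Int)
  moreover have "pair_sign ps (A - {a, b}) = pair_sign ps A"
    using assms(2) by (intro pair_sign_Diff) (auto simp: distinct_pairs_Cons)
  ultimately show ?thesis
    using assms(3) by (simp add: pair_phi_def pair_lift_def)
qed

lemma ip_pair_phi_Cons:
  assumes "finite V" "distinct_pairs V ((a, b) # ps)"
  shows "ip V (Suc k) w (pair_phi V (Suc k) ((a, b) # ps))
       = ip (V - {a, b}) k (pair_diff a b w) (pair_phi (V - {a, b}) k ps)"
proof -
  have "ip V (Suc k) w (pair_phi V (Suc k) ((a, b) # ps))
      = ip V (Suc k) w (pair_lift a b (pair_phi (V - {a, b}) k ps))"
    using pair_phi_Cons[OF assms] by (intro ip_cong) auto
  also have "\<dots> = ip (V - {a, b}) k (pair_diff a b w) (pair_phi (V - {a, b}) k ps)"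
    using assms by (intro ip_pair_lift) (auto simp: distinct_pairs_Cons)
  finally show ?thesis .
qed

lemma ip_pair_phi_append:
  assumes "finite V" "distinct_pairs V (ps @ qs)" "length ps \<le> k"
  shows "ip V k w (pair_phi V k (ps @ qs))
       = ip (V - pair_elems ps) (k - length ps) (iter_diff ps w)
            (pair_phi (V - pair_elems ps) (k - length ps) qs)"
  using assms
proof (induction ps arbitrary: V k w rule: flat_pairs.induct)
  case (2 a b ps)
  then obtain k' where k: "k = Suc k'" by (cases k) auto
  have "distinct_pairs (V - {a, b}) (ps @ qs)"
    using 2(3) by (simp add: distinct_pairs_Cons)
  moreover have "V - {a, b} - pair_elems ps = V - pair_elems ((a, b) # ps)" by auto
  ultimately show ?case
    using ip_pair_phi_Cons[of V a b "ps @ qs" k' w] 2 k by simp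
qed simp

lemma pair_diff_cong:
  assumes "finite V" "a \<in> V" "b \<in> V" "a \<noteq> b" "\<And>A. A \<in> ksub V (Suc k) \<Longrightarrow> f A = g A"
    and "B \<in> ksub (V - {a, b}) k"
  shows "pair_diff a b f B = pair_diff a b g B"
proof -
  have B: "finite B" "a \<notin> B" "b \<notin> B" "B \<subseteq> V"
    using assms(1,6) finite_ksub_member[OF _ assms(6)] by (auto simp: ksub_def)
  then have "insert a (B - {b}) \<in> ksub V (Suc k)" "insert b (B - {a}) \<in> ksub V (Suc k)"
    using assms(2,3,6) by (auto simp: ksub_def)
  then show ?thesis using assms(5) by (simp add: pair_diff_def)
qed

lemma iter_diff_cong:
  assumes "finite V" "distinct_pairs V ps" "length ps \<le> k" "\<And>A. A \<in> ksub V k \<Longrightarrow> f A = g A"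
    and "B \<in> ksub (V - pair_elems ps) (k - length ps)"
  shows "iter_diff ps f B = iter_diff ps g B"
  using assms
proof (induction ps arbitrary: V k f g rule: flat_pairs.induct)
  case (2 a b ps)
  then obtain k' where k: "k = Suc k'" by (cases k) auto
  have ab: "a \<in> V" "b \<in> V" "a \<noteq> b" "distinct_pairs (V - {a, b}) ps"
    using 2(3) by (auto simp: distinct_pairs_Cons)
  have "V - {a, b} - pair_elems ps = V - pair_elems ((a, b) # ps)" by auto
  then show ?case
    using 2(1)[OF _ ab(4), of k' "pair_diff a b f" "pair_diff a b g"] 2(2,4,5,6) k
      pair_diff_cong[OF 2(2) ab(1-3), of k' f g] by auto
qed simp

section \<open>Polynomial degree\<close>

definition up_indicator :: "'a set \<Rightarrow> 'a weighting" where
  "up_indicator T = (\<lambda>A. if T \<subseteq> A then 1 else 0)"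

definition degree_le :: "nat \<Rightarrow> 'a weighting set" where
  "degree_le d = weighting.span {up_indicator T | T. finite T \<and> card T \<le> d}"

lemma up_indicator_degree_le: "finite T \<Longrightarrow> card T \<le> d \<Longrightarrow> up_indicator T \<in> degree_le d"
  unfolding degree_le_def by (rule weighting.span_base) auto

lemma pair_diff_up_indicator:
  assumes "a \<noteq> b"
  shows "pair_diff a b (up_indicator T) =
    (if a \<in> T \<and> b \<notin> T then up_indicator (T - {a})
     else if b \<in> T \<and> a \<notin> T then - up_indicator (T - {b}) else 0)"
  using assms by (auto simp: pair_diff_def up_indicator_def fun_eq_iff)

lemma pair_diff_degree_le_0:
  assumes "a \<noteq> b" "g \<in> degree_le 0"
  shows "pair_diff a b g = 0"
proof -
  have "pair_diff a b g \<in> {0}"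
    using linear_pair_diff weighting.subspace_single_0 _ assms(2)[unfolded degree_le_def]
  proof (rule linear_weighting_span)
    fix f :: "'a weighting"
    assume "f \<in> {up_indicator T | T. finite T \<and> card T \<le> 0}"
    then show "pair_diff a b f \<in> {0}"
      using pair_diff_up_indicator[OF assms(1)] by auto
  qed
  then show ?thesis by simp
qed

lemma pair_diff_degree_le_Suc:
  assumes "a \<noteq> b" "g \<in> degree_le (Suc d)"
  shows "pair_diff a b g \<in> degree_le d"
  using linear_pair_diff weighting.subspace_span _ assms(2)[unfolded degree_le_def]
  unfolding degree_le_def[of d]
proof (rule linear_weighting_span)
  fix f :: "'a weighting"
  assume "f \<in> {up_indicator T | T. finite T \<and> card T \<le> Suc d}"
  then obtain T where T: "f = up_indicator T" "finite T" "card T \<le> Suc d" by auto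
  have "up_indicator (T - {c}) \<in> degree_le d" if "c \<in> T" for c
    using T that by (intro up_indicator_degree_le) (auto simp: card_Diff_singleton)
  then show "pair_diff a b f \<in> weighting.span {up_indicator T | T. finite T \<and> card T \<le> d}"
    unfolding T(1) pair_diff_up_indicator[OF assms(1)] degree_le_def
    by (auto intro: weighting.span_neg weighting.span_zero)
qed

lemma iter_diff_degree_le:
  assumes "\<forall>(a, b)\<in>set ps. a \<noteq> b" "g \<in> degree_le d" "d < length ps"
  shows "iter_diff ps g = 0"
  using assms
proof (induction ps arbitrary: d g rule: flat_pairs.induct)
  case (2 a b ps)
  show ?case
  proof (cases d)
    case 0
    then have "pair_diff a b g = 0" using pair_diff_degree_le_0 2(2,3) by auto
    then show ?thesis by (simp only: iter_diff.simps module_hom.zero[OF linear_iter_diff])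
  next
    case (Suc d')
    then have "pair_diff a b g \<in> degree_le d'" using pair_diff_degree_le_Suc 2(2,3) by auto
    then show ?thesis using 2(1)[of "pair_diff a b g" d'] 2(2,4) Suc by simp
  qed
qed simp

lemma indicator_times_degree_le:
  assumes "f \<in> degree_le d"
  shows "(\<lambda>A. indicator A a * f A) \<in> degree_le (Suc d)"
proof -
  have "linear_weighting (\<lambda>f A. indicator A a * f A)"
    by (rule linear_weightingI) (simp_all add: fscale_apply fun_eq_iff algebra_simps)
  then show ?thesis using weighting.subspace_span _ assms[unfolded degree_le_def]
    unfolding degree_le_def[of "Suc d"]
  proof (rule linear_weighting_span)
    fix g :: "'a weighting"
    assume "g \<in> {up_indicator T | T. finite T \<and> card T \<le> d}"
    then obtain T where T: "g = up_indicator T" "finite T" "card T \<le> d" by auto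
    then have "(\<lambda>A. indicator A a * g A) = up_indicator (insert a T)"
      by (auto simp: up_indicator_def indicator_def fun_eq_iff)
    moreover have "card (insert a T) \<le> Suc d" using T by (simp add: card_insert_if)
    ultimately show "(\<lambda>A. indicator A a * g A)
        \<in> weighting.span {up_indicator T | T. finite T \<and> card T \<le> Suc d}"
      using T(2) by (auto intro: weighting.span_base)
  qed
qed

lemma pair_sign_degree_le: "pair_sign ps \<in> degree_le (length ps)"
proof (induction ps rule: flat_pairs.induct)
  case 1
  have "pair_sign [] = up_indicator {}" by (simp add: up_indicator_def fun_eq_iff)
  moreover have "up_indicator {} \<in> degree_le 0" by (rule up_indicator_degree_le) auto
  ultimately show ?case by (metis list.size(3))
next
  case (2 a b ps)
  have "pair_sign ((a, b) # ps) = (\<lambda>A. indicator A a * pair_sign ps A) - (\<lambda>A. indicator A b * pair_sign ps A)"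
    by (simp add: fun_eq_iff algebra_simps)
  moreover have "(\<lambda>A. indicator A a * pair_sign ps A) - (\<lambda>A. indicator A b * pair_sign ps A)
      \<in> degree_le (Suc (length ps))"
    using indicator_times_degree_le[OF 2] unfolding degree_le_def by (intro weighting.span_diff)
  ultimately show ?case by (simp only: length_Cons)
qed

section \<open>Orthogonality, completeness and decomposition of the levels\<close>

lemma ip_pair_phi_eq_0_less:
  assumes "finite V" "distinct_pairs V ps" "distinct_pairs V qs" "length qs < length ps"
    and "length ps \<le> k"
  shows "ip V k (pair_phi V k qs) (pair_phi V k ps) = 0"
proof -
  let ?V = "V - pair_elems ps" and ?k = "k - length ps"
  have "ip V k (pair_phi V k qs) (pair_phi V k (ps @ []))
      = ip ?V ?k (iter_diff ps (pair_phi V k qs)) (pair_phi ?V ?k [])"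
    using assms by (intro ip_pair_phi_append) auto
  also have "\<dots> = ip ?V ?k (iter_diff ps (pair_sign qs)) (pair_phi ?V ?k [])"
    using assms by (intro ip_cong iter_diff_cong) (auto simp: pair_phi_def)
  also have "iter_diff ps (pair_sign qs) = 0"
    using assms(2,4) pair_sign_degree_le distinct_pairs_neq by (blast intro: iter_diff_degree_le)
  finally show ?thesis by (simp add: ip_def)
qed

lemma ip_pair_phi_eq_0:
  assumes "finite V" "distinct_pairs V ps" "distinct_pairs V qs" "length qs \<noteq> length ps"
    and "length ps \<le> k" "length qs \<le> k"
  shows "ip V k (pair_phi V k qs) (pair_phi V k ps) = 0"
  using assms ip_pair_phi_eq_0_less[of V ps qs k] ip_pair_phi_eq_0_less[of V qs ps k] ip_comm
  by (metis linorder_neqE_nat)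

lemma ip_level_space_eq_0:
  assumes "finite V" "u \<in> level_space V k i" "v \<in> level_space V k j" "i \<noteq> j" "i \<le> k" "j \<le> k"
  shows "ip V k u v = 0"
  using assms(2,3) unfolding level_space_def
  by (rule ip_eq_0_on_spans) (use assms ip_pair_phi_eq_0 in \<open>auto simp: pair_phis_def\<close>)

lemma wsum_level_space_eq_0:
  "finite V \<Longrightarrow> 1 \<le> h \<Longrightarrow> h \<le> k \<Longrightarrow> u \<in> level_space V k h \<Longrightarrow> wsum V k u = 0"
  unfolding wsum_eq_ip_pair_phi_Nil
  using ip_level_space_eq_0[OF _ _ pair_phi_level_space[of V "[]" k], of u h] by auto

text \<open>Any two (k+1)-sets are joined by a chain of single-element exchanges.\<close>

lemma exchange_invariant_imp_const:
  assumes "finite V"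
    and exchange: "\<And>a b B. a \<in> V \<Longrightarrow> b \<in> V \<Longrightarrow> a \<noteq> b \<Longrightarrow> B \<in> ksub (V - {a, b}) k
        \<Longrightarrow> w (insert a B) = w (insert b B)"
  shows "A \<in> ksub V (Suc k) \<Longrightarrow> A' \<in> ksub V (Suc k) \<Longrightarrow> w A = w A'"
proof (induction "card (A - A')" arbitrary: A rule: less_induct)
  case less
  show ?case
  proof (cases "A = A'")
    case False
    have fin: "finite A" "finite A'" using less.prems assms(1) by (auto intro: finite_ksub_member)
    moreover have "card A = card A'" using less.prems by (simp add: ksub_def)
    ultimately have "\<not> A \<subseteq> A'" "\<not> A' \<subseteq> A"
      using False card_subset_eq by metis+
    then obtain a b where a: "a \<in> A'" "a \<notin> A" and b: "b \<in> A" "b \<notin> A'"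
      by blast
    define B where "B = A - {b}"
    have B: "B \<in> ksub (V - {a, b}) k" "a \<in> V" "b \<in> V"
      using less.prems a b fin by (auto simp: ksub_def B_def)
    have "w A = w (insert b B)" using b by (simp add: B_def insert_absorb)
    also have "\<dots> = w (insert a B)" using exchange[OF B(3,2) _] B(1) a b by (metis insert_commute)
    also have "\<dots> = w A'"
    proof (rule less.hyps)
      have "insert a B - A' = (A - A') - {b}" using a b by (auto simp: B_def)
      moreover have "b \<in> A - A'" using b by simp
      ultimately show "card (insert a B - A') < card (A - A')"
        using fin by (metis card_Diff1_less finite_Diff)
      show "insert a B \<in> ksub V (Suc k)"
        using B fin by (auto simp: ksub_def B_def card_insert_if)
    qed (use less.prems in auto)
    finally show ?thesis .
  qed simp
qed

lemma exchange_invariant_eq_0: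
  assumes "finite V" "Suc k \<le> card V" "w \<in> WS V (Suc k)"
    and exchange: "\<And>a b B. a \<in> V \<Longrightarrow> b \<in> V \<Longrightarrow> a \<noteq> b \<Longrightarrow> B \<in> ksub (V - {a, b}) k
        \<Longrightarrow> w (insert a B) = w (insert b B)"
    and "wsum V (Suc k) w = 0"
  shows "w = 0"
proof -
  have card_pos: "card (ksub V (Suc k)) > 0"
    using assms(1,2) by (simp add: card_ksub)
  then obtain A0 where A0: "A0 \<in> ksub V (Suc k)"
    by (metis card_gt_0_iff ex_in_conv)
  have const: "w A = w A0" if "A \<in> ksub V (Suc k)" for A
    using exchange_invariant_imp_const[where w = w, OF assms(1) exchange that A0] by simp
  then have "wsum V (Suc k) w = w A0 * card (ksub V (Suc k))"
    unfolding wsum_def by simp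
  then have "w A0 = 0" using assms(5) card_pos by simp
  then show ?thesis using const assms(3) by (auto simp: WS_def fun_eq_iff)
qed

lemma ip_pair_phis_eq_0_imp_zero:
  assumes "finite V" "2 * k \<le> card V" "w \<in> WS V k"
    and "\<And>ps. distinct_pairs V ps \<Longrightarrow> length ps \<le> k \<Longrightarrow> ip V k w (pair_phi V k ps) = 0"
  shows "w = 0"
  using assms
proof (induction k arbitrary: V w)
  case 0
  have "w {} = ip V 0 w (pair_phi V 0 [])"
    using ksub_0[OF 0(1)] by (simp add: ip_def pair_phi_def)
  then have "w e = 0" for e
    using 0(3) 0(4)[of "[]"] ksub_0[OF 0(1)] by (cases "e = {}") (auto simp: WS_def)
  then show ?case by (simp add: fun_eq_iff)
next
  case (Suc k)
  have exchange: "w (insert a B) = w (insert b B)"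
    if ab: "a \<in> V" "b \<in> V" "a \<noteq> b" and B: "B \<in> ksub (V - {a, b}) k" for a b B
  proof -
    define g where "g = (\<lambda>B. if B \<in> ksub (V - {a, b}) k then pair_diff a b w B else 0)"
    have "g = 0"
    proof (rule Suc.IH)
      show "finite (V - {a, b})" "g \<in> WS (V - {a, b}) k"
        using Suc.prems by (auto simp: g_def WS_def)
      show "2 * k \<le> card (V - {a, b})"
        using Suc.prems(2) ab by (simp add: card_Diff_subset)
      fix qs assume qs: "distinct_pairs (V - {a, b}) qs" "length qs \<le> k"
      then have "distinct_pairs V ((a, b) # qs)"
        using ab by (auto simp: distinct_pairs_Cons distinct_pairs_def)
      then have "ip (V - {a, b}) k (pair_diff a b w) (pair_phi (V - {a, b}) k qs) = 0"
        using Suc.prems(1,4) qs ip_pair_phi_Cons by fastforce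
      then show "ip (V - {a, b}) k g (pair_phi (V - {a, b}) k qs) = 0"
        by (simp add: g_def ip_def)
    qed
    then have "pair_diff a b w B = 0" using B by (metis g_def zero_fun_apply)
    moreover have "a \<notin> B" "b \<notin> B" using B by (auto simp: ksub_def)
    ultimately show ?thesis by (simp add: pair_diff_def)
  qed
  show ?case
    using Suc.prems(2) Suc.prems(4)[of "[]"]
    by (intro exchange_invariant_eq_0[OF Suc.prems(1) _ Suc.prems(3) exchange])
      (auto simp: wsum_eq_ip_pair_phi_Nil)
qed

lemma level_space_eq_0:
  assumes "finite V" "u \<in> level_space V k h"
    and "\<And>ps. distinct_pairs V ps \<Longrightarrow> length ps = h \<Longrightarrow> ip V k u (pair_phi V k ps) = 0"
  shows "u = 0"
proof -
  have "ip V k u u = 0" using assms(2) unfolding level_space_def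
    by (rule ip_eq_0_on_span) (use assms(3) in \<open>auto simp: pair_phis_def\<close>)
  then show ?thesis using ip_self_eq_0_imp_zero[OF assms(1)] level_space_WS assms(2) by blast
qed

lemma span_pair_phis_level_sum:
  assumes "s \<in> weighting.span (\<Union>h\<le>k. pair_phis V k h)"
  shows "\<exists>u. (\<forall>h\<le>k. u h \<in> level_space V k h) \<and> s = (\<Sum>h\<le>k. u h)"
  using assms
proof (induction rule: weighting.span_induct_alt)
  case base
  have "\<forall>h\<le>k. (0 :: 'a weighting) \<in> level_space V k h"
    by (simp only: level_space_def weighting.span_zero simp_thms)
  then show ?case by (intro exI[of _ "\<lambda>_. 0"]) (simp only: sum.neutral_const)
next
  case (step c g s)
  then obtain h0 where h0: "h0 \<le> k" "g \<in> pair_phis V k h0" by auto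
  obtain u where u: "\<forall>h\<le>k. u h \<in> level_space V k h" "s = (\<Sum>h\<le>k. u h)"
    using step by auto
  define u' where "u' h = (if h = h0 then fscale c g else 0) + u h" for h
  have u'_level: "\<forall>h\<le>k. u' h \<in> level_space V k h"
  proof (intro allI impI)
    fix h assume "h \<le> k"
    show "u' h \<in> level_space V k h"
    proof (cases "h = h0")
      case True
      have "fscale c g + u h0 \<in> level_space V k h0"
        using weighting.span_add[OF weighting.span_scale[OF weighting.span_base[OF h0(2)]], of "u h0" c]
          u(1) h0(1) unfolding level_space_def by blast
      then show ?thesis using True by (simp add: u'_def)
    next
      case False
      then show ?thesis using u(1) \<open>h \<le> k\<close> by (simp add: u'_def)
    qed
  qed
  have "(\<Sum>h\<le>k. u' h) = (\<Sum>h\<le>k. if h = h0 then fscale c g else 0) + s"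
    unfolding u'_def u(2) by (rule sum.distrib)
  also have "(\<Sum>h\<le>k. if h = h0 then fscale c g else 0) = fscale c g"
    using h0(1) by (subst sum.delta) auto
  finally show ?case using u'_level by (intro exI[of _ u']) simp
qed

lemma exists_level_decomposition:
  assumes "finite V" "2 * k \<le> card V" "w \<in> WS V k"
  shows "\<exists>u. (\<forall>h\<le>k. u h \<in> level_space V k h) \<and> w = (\<Sum>h\<le>k. u h)"
proof -
  let ?G = "\<Union>h\<le>k. pair_phis V k h"
  have G: "finite ?G" "?G \<subseteq> WS V k"
    using finite_pair_phis[OF assms(1)] pair_phis_WS by blast+
  obtain s where s: "s \<in> weighting.span ?G" "\<forall>g\<in>?G. ip V k (w - s) g = 0"
    using exists_orth_projection[OF assms(1) G] by blast
  have "s \<in> WS V k" using s(1) weighting.span_minimal[OF G(2) WS_subspace] by blast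
  then have "w - s \<in> WS V k" using assms(3) by (auto simp: WS_def)
  moreover have "ip V k (w - s) (pair_phi V k ps) = 0"
    if "distinct_pairs V ps" "length ps \<le> k" for ps
    using s(2) that by (auto simp: pair_phis_def)
  ultimately have "w - s = 0"
    using ip_pair_phis_eq_0_imp_zero[OF assms(1,2)] by blast
  then show ?thesis using span_pair_phis_level_sum[OF s(1)] by simp
qed

lemma ip_level_sum:
  assumes "finite V" "\<forall>h\<le>k. u h \<in> level_space V k h" "v \<in> level_space V k j" "j \<le> k"
  shows "ip V k (\<Sum>h\<le>k. u h) v = ip V k (u j) v"
proof -
  have "ip V k (\<Sum>h\<le>k. u h) v = (\<Sum>h\<le>k. if h = j then ip V k (u j) v else 0)"
    unfolding ip_sum_left using assms by (intro sum.cong) (auto intro: ip_level_space_eq_0)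
  then show ?thesis using assms(4) by simp
qed

lemma level_sum_eq_0:
  assumes "finite V" "\<forall>h\<le>k. u h \<in> level_space V k h" "(\<Sum>h\<le>k. u h) = 0" "j \<le> k"
  shows "u j = 0"
proof -
  have "ip V k (u j) (u j) = 0"
    using ip_level_sum[OF assms(1,2) _ assms(4), of "u j"] assms by simp
  then show ?thesis using ip_self_eq_0_imp_zero[OF assms(1)] level_space_WS assms by blast
qed

lemma Wv_nonneg: "Wv k V g i \<ge> 0"
proof (induction k V g i rule: Wv.induct)
  case (3 k V w i)
  have "(\<Sum>p\<in>{(a, b). a \<in> V \<and> b \<in> V \<and> a \<noteq> b}.
      Wv k (V - {fst p, snd p}) (\<lambda>e. w (insert (fst p) e) - w (insert (snd p) e)) i) \<ge> 0"
    using 3 by (intro sum_nonneg) auto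
  moreover have "real (card V) * (real (card V) - 1) \<ge> 0" by (cases "card V") auto
  ultimately show ?case by simp
qed auto

lemma ip_pair_phi_Cons_insert:
  assumes "finite V" "distinct_pairs V ((a, b) # ps)"
  shows "ip (V - {a, b}) k (\<lambda>B. g (insert a B) - g (insert b B)) (pair_phi (V - {a, b}) k ps)
       = ip V (Suc k) g (pair_phi V (Suc k) ((a, b) # ps))"
proof -
  have "ip (V - {a, b}) k (\<lambda>B. g (insert a B) - g (insert b B)) (pair_phi (V - {a, b}) k ps)
      = ip (V - {a, b}) k (pair_diff a b g) (pair_phi (V - {a, b}) k ps)"
  proof (rule ip_cong)
    fix B assume "B \<in> ksub (V - {a, b}) k"
    then have "B - {b} = B" "B - {a} = B" by (auto simp: ksub_def)
    then show "g (insert a B) - g (insert b B) = pair_diff a b g B" by (simp add: pair_diff_def)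
  qed simp
  also have "\<dots> = ip V (Suc k) g (pair_phi V (Suc k) ((a, b) # ps))"
    using ip_pair_phi_Cons[OF assms] by simp
  finally show ?thesis .
qed

lemma Wv_eq_0_iff:
  assumes "finite V" "2 * k \<le> card V" "i \<le> k"
  shows "Wv k V g i = 0 \<longleftrightarrow>
    (\<forall>ps. distinct_pairs V ps \<and> length ps = i \<longrightarrow> ip V k g (pair_phi V k ps) = 0)"
  using assms
proof (induction k arbitrary: V g i)
  case 0
  then show ?case by (auto simp: wsum_eq_ip_pair_phi_Nil)
next
  case (Suc k)
  show ?case
  proof (cases i)
    case 0
    then show ?thesis using Suc.prems by (auto simp: wsum_eq_ip_pair_phi_Nil)
  next
    case (Suc i')
    let ?P = "{(a, b). a \<in> V \<and> b \<in> V \<and> a \<noteq> b}"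
    let ?T = "\<lambda>p. Wv k (V - {fst p, snd p}) (\<lambda>e. g (insert (fst p) e) - g (insert (snd p) e)) i'"
    have "finite ?P" by (rule finite_subset[of _ "V \<times> V"]) (auto simp: Suc.prems(1))
    moreover have "real (card V) * (real (card V) - 1) > 0" using Suc.prems(2) by simp
    ultimately have "Wv (Suc k) V g i = 0 \<longleftrightarrow> (\<forall>p\<in>?P. ?T p = 0)"
      using \<open>i = Suc i'\<close> Suc.prems(2) by (simp add: sum_nonneg_eq_0_iff Wv_nonneg)
    also have "\<dots> \<longleftrightarrow> (\<forall>a b qs. a \<in> V \<and> b \<in> V \<and> a \<noteq> b \<and> distinct_pairs (V - {a, b}) qs
        \<and> length qs = i' \<longrightarrow> ip V (Suc k) g (pair_phi V (Suc k) ((a, b) # qs)) = 0)"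
    proof -
      have "?T (a, b) = 0 \<longleftrightarrow> (\<forall>qs. distinct_pairs (V - {a, b}) qs \<and> length qs = i' \<longrightarrow>
          ip V (Suc k) g (pair_phi V (Suc k) ((a, b) # qs)) = 0)"
        if ab: "a \<in> V" "b \<in> V" "a \<noteq> b" for a b
      proof -
        have "2 * k \<le> card (V - {a, b})" "i' \<le> k"
          using Suc.prems ab \<open>i = Suc i'\<close> by (auto simp: card_Diff_subset)
        then have "?T (a, b) = 0 \<longleftrightarrow> (\<forall>qs. distinct_pairs (V - {a, b}) qs \<and> length qs = i' \<longrightarrow>
            ip (V - {a, b}) k (\<lambda>e. g (insert a e) - g (insert b e)) (pair_phi (V - {a, b}) k qs) = 0)"
          using Suc.IH[of "V - {a, b}" i'] Suc.prems(1) by simp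
        moreover have "distinct_pairs V ((a, b) # qs)" if "distinct_pairs (V - {a, b}) qs" for qs
          using that ab by (auto simp: distinct_pairs_Cons distinct_pairs_def)
        ultimately show ?thesis
          using ip_pair_phi_Cons_insert[OF Suc.prems(1)] by auto
      qed
      then show ?thesis by auto
    qed
    also have "\<dots> \<longleftrightarrow> (\<forall>ps. distinct_pairs V ps \<and> length ps = i
        \<longrightarrow> ip V (Suc k) g (pair_phi V (Suc k) ps) = 0)"
      unfolding \<open>i = Suc i'\<close> by (rule all_distinct_pairs_Suc[symmetric])
    finally show ?thesis .
  qed
qed

section \<open>Antisymmetrising along pairs\<close>

definition swap_diff :: "'a \<Rightarrow> 'a \<Rightarrow> 'a weighting \<Rightarrow> 'a weighting" where
  "swap_diff a b z = z - wperm (Transposition.transpose a b) z"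

fun iter_swap_diff :: "('a \<times> 'a) list \<Rightarrow> 'a weighting \<Rightarrow> 'a weighting" where
  "iter_swap_diff [] z = z"
| "iter_swap_diff ((a, b) # ps) z = iter_swap_diff ps (swap_diff a b z)"

lemma linear_iter_swap_diff: "linear_weighting (iter_swap_diff ps)"
proof (induction ps rule: flat_pairs.induct)
  case 1
  show ?case by (rule linear_weightingI) (simp_all add: fun_eq_iff)
next
  case (2 a b ps)
  have "linear_weighting (swap_diff a b)"
    by (rule linear_weightingI) (simp_all add: swap_diff_def wperm_def fscale_apply fun_eq_iff algebra_simps)
  moreover have "iter_swap_diff ((a, b) # ps) = iter_swap_diff ps \<circ> swap_diff a b"
    by (simp add: fun_eq_iff)
  ultimately show ?case by (simp only: module_hom_compose[OF _ 2])
qed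

lemma iter_swap_diff_level_space:
  assumes "set ps \<subseteq> V \<times> V" "u \<in> level_space V k h"
  shows "iter_swap_diff ps u \<in> level_space V k h"
  using assms
proof (induction ps arbitrary: u rule: flat_pairs.induct)
  case (2 a b ps)
  have "Transposition.transpose a b permutes V" using 2(2) by (intro permutes_swap_id) auto
  then have "swap_diff a b u \<in> level_space V k h"
    unfolding swap_diff_def using 2(3) level_space_wperm level_space_subspace
    by (metis weighting.subspace_diff)
  then show ?case using 2 by simp
qed simp

lemma swap_diff_pair_lift:
  assumes "a \<notin> {c, d}" "b \<notin> {c, d}"
  shows "swap_diff c d (pair_lift a b g) = pair_lift a b (swap_diff c d g)"
proof -
  let ?t = "Transposition.transpose c d"
  have "?t ` A - {a, b} = ?t ` (A - {a, b})" for A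
    using assms by (simp add: image_set_diff)
  moreover have "a \<in> ?t ` A \<longleftrightarrow> a \<in> A" "b \<in> ?t ` A \<longleftrightarrow> b \<in> A" for A
    using assms by (auto simp: in_transpose_image_iff)
  ultimately show ?thesis
    by (simp add: swap_diff_def wperm_def pair_lift_def fun_eq_iff indicator_def algebra_simps)
qed

lemma iter_swap_diff_pair_lift:
  assumes "a \<notin> pair_elems ps" "b \<notin> pair_elems ps"
  shows "iter_swap_diff ps (pair_lift a b g) = pair_lift a b (iter_swap_diff ps g)"
  using assms
  by (induction ps arbitrary: g rule: flat_pairs.induct) (auto simp: swap_diff_pair_lift)

lemma swap_diff_eq_pair_lift:
  assumes "a \<noteq> b"
  shows "swap_diff a b z = pair_lift a b (pair_diff a b z)"
proof
  fix A
  let ?t = "Transposition.transpose a b"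
  consider "a \<in> A" "b \<notin> A" | "b \<in> A" "a \<notin> A" | "a \<in> A \<longleftrightarrow> b \<in> A" by blast
  then show "swap_diff a b z A = pair_lift a b (pair_diff a b z) A"
  proof cases
    case 1
    then have "?t ` A = insert b (A - {a})"
      using assms by (intro set_eqI) (auto simp: in_transpose_image_iff Transposition.transpose_def split: if_splits)
    moreover have "insert a (A - {a, b} - {b}) = A" "insert b (A - {a, b} - {a}) = insert b (A - {a})"
      using 1 by auto
    ultimately
    show ?thesis using 1 assms by (simp add: swap_diff_def wperm_def pair_lift_def pair_diff_def)
  next
    case 2
    then have "?t ` A = insert a (A - {b})"
      using assms by (intro set_eqI) (auto simp: in_transpose_image_iff Transposition.transpose_def split: if_splits)
    moreover have "insert a (A - {a, b} - {b}) = insert a (A - {b})" "insert b (A - {a, b} - {a}) = A"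
      using 2 by auto
    ultimately
    show ?thesis using 2 assms by (simp add: swap_diff_def wperm_def pair_lift_def pair_diff_def)
  next
    case 3
    then have "?t ` A = A"
      by (intro set_eqI) (auto simp: in_transpose_image_iff Transposition.transpose_def split: if_splits)
    with 3 show ?thesis by (auto simp: swap_diff_def wperm_def pair_lift_def)
  qed
qed

text \<open>swap_diff a b factors as pair_lift a b after pair_diff a b, and pair_lift is adjoint to
  pair_diff.\<close>

lemma ip_iter_swap_diff:
  assumes "finite V" "distinct_pairs V ps" "length ps \<le> k"
  shows "ip V k (iter_swap_diff ps x) y
       = ip (V - pair_elems ps) (k - length ps) (iter_diff ps x) (iter_diff ps y)"
  using assms
proof (induction ps arbitrary: V k x y rule: flat_pairs.induct)
  case (2 a b ps)
  then obtain k' where k: "k = Suc k'" by (cases k) auto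
  have ab: "a \<noteq> b" "a \<notin> pair_elems ps" "b \<notin> pair_elems ps" "a \<in> V" "b \<in> V"
    and ps: "distinct_pairs (V - {a, b}) ps"
    using 2(3) by (auto simp: distinct_pairs_Cons)
  have "iter_swap_diff ((a, b) # ps) x = pair_lift a b (iter_swap_diff ps (pair_diff a b x))"
    using ab by (simp add: swap_diff_eq_pair_lift iter_swap_diff_pair_lift)
  then have "ip V k (iter_swap_diff ((a, b) # ps) x) y
      = ip (V - {a, b}) k' (pair_diff a b y) (iter_swap_diff ps (pair_diff a b x))"
    using ab 2(2) k by (simp add: ip_comm ip_pair_lift)
  also have "\<dots> = ip (V - {a, b} - pair_elems ps) (k' - length ps)
      (iter_diff ps (pair_diff a b x)) (iter_diff ps (pair_diff a b y))"
    using 2(1)[OF _ ps] 2(2,4) k by (simp add: ip_comm)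
  also have "V - {a, b} - pair_elems ps = V - pair_elems ((a, b) # ps)" by auto
  finally show ?case using k by simp
qed simp

text \<open>Each antisymmetrising step is a difference of two permuted copies.\<close>

lemma ip_iter_swap_diff_wperm:
  assumes "set ps \<subseteq> V \<times> V" "ps \<noteq> []" "\<pi> permutes V"
    and const: "\<And>\<pi>. \<pi> permutes V \<Longrightarrow> ip V k (wperm \<pi> x) y = C"
  shows "ip V k (iter_swap_diff ps (wperm \<pi> x)) y = 0"
proof -
  have "ip V k (iter_swap_diff ps (wperm \<pi> x)) y = (if ps = [] then C else 0)"
    using assms(1,3)
  proof (induction ps arbitrary: \<pi> rule: flat_pairs.induct)
    case (2 a b ps)
    let ?t = "Transposition.transpose a b"
    have t: "?t permutes V" "?t \<circ> \<pi> permutes V"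
      using 2(2,3) by (auto intro: permutes_swap_id permutes_compose)
    have "iter_swap_diff ((a, b) # ps) (wperm \<pi> x)
        = iter_swap_diff ps (wperm \<pi> x) - iter_swap_diff ps (wperm (?t \<circ> \<pi>) x)"
      using wperm_wperm[OF t(1) 2(3)]
      by (simp add: swap_diff_def module_hom.diff[OF linear_iter_swap_diff])
    then have "ip V k (iter_swap_diff ((a, b) # ps) (wperm \<pi> x)) y
        = ip V k (iter_swap_diff ps (wperm \<pi> x)) y - ip V k (iter_swap_diff ps (wperm (?t \<circ> \<pi>) x)) y"
      by (simp only: ip_diff_left)
    then show ?case using 2 t(2) by simp
  qed (use const in simp)
  with assms(2) show ?thesis by simp
qed

lemma iter_diff_level_space_less:
  assumes "finite V" "2 * k \<le> card V" "distinct_pairs V ps" "length ps \<le> k"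
    and "x \<in> level_space V k h" "h < length ps"
    and "B \<in> ksub (V - pair_elems ps) (k - length ps)"
  shows "iter_diff ps x B = 0"
proof -
  let ?V = "V - pair_elems ps" and ?k = "k - length ps"
  define g where "g = (\<lambda>B. if B \<in> ksub ?V ?k then iter_diff ps x B else 0)"
  have "g = 0"
  proof (rule ip_pair_phis_eq_0_imp_zero)
    show "finite ?V" "g \<in> WS ?V ?k" using assms(1) by (auto simp: g_def WS_def)
    show "2 * ?k \<le> card ?V" using card_Diff_pair_elems[OF assms(1,3)] assms(2) by simp
    fix qs assume qs: "distinct_pairs ?V qs" "length qs \<le> ?k"
    have "ip ?V ?k g (pair_phi ?V ?k qs) = ip ?V ?k (iter_diff ps x) (pair_phi ?V ?k qs)"
      by (rule ip_cong) (auto simp: g_def)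
    also have "\<dots> = ip V k x (pair_phi V k (ps @ qs))"
      using assms(1,3,4) qs by (intro ip_pair_phi_append[symmetric]) (auto simp: distinct_pairs_append)
    also have "\<dots> = 0"
    proof (rule ip_level_space_eq_0[OF assms(1,5)])
      show "pair_phi V k (ps @ qs) \<in> level_space V k (length (ps @ qs))"
        using qs assms(3) by (intro pair_phi_level_space) (simp add: distinct_pairs_append)
    qed (use assms(4,6) qs in auto)
    finally show "ip ?V ?k g (pair_phi ?V ?k qs) = 0" .
  qed
  then show ?thesis using assms(7) by (metis g_def zero_fun_apply)
qed

lemma iter_diff_level_space_eq:
  assumes "finite V" "2 * k \<le> card V" "distinct_pairs V ps" "length ps \<le> k"
    and "x \<in> level_space V k (length ps)"
    and "B \<in> ksub (V - pair_elems ps) (k - length ps)"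
  shows "iter_diff ps x B
       = ip V k x (pair_phi V k ps) / real (card (V - pair_elems ps) choose (k - length ps))"
proof -
  let ?V = "V - pair_elems ps" and ?k = "k - length ps"
  have fin: "finite ?V" using assms(1) by simp
  have pos: "real (card ?V choose ?k) > 0"
    using card_Diff_pair_elems[OF assms(1,3)] assms(2,4) by simp
  define c where "c = ip V k x (pair_phi V k ps) / real (card ?V choose ?k)"
  define g where "g = (\<lambda>B. if B \<in> ksub ?V ?k then iter_diff ps x B - c else 0)"
  have "g = 0"
  proof (rule ip_pair_phis_eq_0_imp_zero[OF fin])
    show "g \<in> WS ?V ?k" by (simp add: g_def WS_def)
    show "2 * ?k \<le> card ?V" using card_Diff_pair_elems[OF assms(1,3)] assms(2) by simp
    fix qs assume qs: "distinct_pairs ?V qs" "length qs \<le> ?k"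
    have "ip ?V ?k g (pair_phi ?V ?k qs)
        = ip ?V ?k (iter_diff ps x) (pair_phi ?V ?k qs) - c * ip ?V ?k (pair_phi ?V ?k []) (pair_phi ?V ?k qs)"
      unfolding ip_def g_def pair_phi_def
      by (simp add: left_diff_distrib sum_subtractf sum_distrib_left cong: sum.cong)
    also have "ip ?V ?k (iter_diff ps x) (pair_phi ?V ?k qs) = ip V k x (pair_phi V k (ps @ qs))"
      using assms(1,3,4) qs by (intro ip_pair_phi_append[symmetric]) (auto simp: distinct_pairs_append)
    finally have g_qs: "ip ?V ?k g (pair_phi ?V ?k qs)
        = ip V k x (pair_phi V k (ps @ qs)) - c * ip ?V ?k (pair_phi ?V ?k []) (pair_phi ?V ?k qs)" .
    show "ip ?V ?k g (pair_phi ?V ?k qs) = 0"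
    proof (cases "qs = []")
      case True
      have "ip ?V ?k (pair_phi ?V ?k []) (pair_phi ?V ?k []) = real (card ?V choose ?k)"
        using fin by (simp add: ip_def pair_phi_def card_ksub)
      then show ?thesis using g_qs True pos by (simp add: c_def)
    next
      case False
      have "ip V k x (pair_phi V k (ps @ qs)) = 0"
      proof (rule ip_level_space_eq_0[OF assms(1,5)])
        show "pair_phi V k (ps @ qs) \<in> level_space V k (length (ps @ qs))"
          using qs assms(3) by (intro pair_phi_level_space) (simp add: distinct_pairs_append)
      qed (use assms(4) qs False in auto)
      moreover have "ip ?V ?k (pair_phi ?V ?k []) (pair_phi ?V ?k qs) = 0"
        using qs False by (intro ip_pair_phi_eq_0[OF fin]) auto
      ultimately show ?thesis using g_qs by simp
    qed
  qed
  then show ?thesis using assms(6) by (metis c_def diff_eq_eq g_def add_0 zero_fun_apply)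
qed

lemma ip_iter_swap_diff_level_less:
  assumes "finite V" "2 * k \<le> card V" "distinct_pairs V ps" "length ps \<le> k"
    and "x \<in> level_space V k h" "h < length ps"
  shows "ip V k (iter_swap_diff ps x) y = 0"
proof -
  have "ip V k (iter_swap_diff ps x) y
      = ip (V - pair_elems ps) (k - length ps) (iter_diff ps x) (iter_diff ps y)"
    using assms by (intro ip_iter_swap_diff) auto
  also have "\<dots> = 0"
    using iter_diff_level_space_less[OF assms] by (simp add: ip_def)
  finally show ?thesis .
qed

lemma ip_iter_swap_diff_level_eq:
  assumes "finite V" "2 * k \<le> card V" "distinct_pairs V ps" "length ps \<le> k"
    and "x \<in> level_space V k (length ps)" "y \<in> level_space V k (length ps)"
  shows "ip V k (iter_swap_diff ps x) y = ip V k x (pair_phi V k ps) * ip V k y (pair_phi V k ps)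
     / real (card (V - pair_elems ps) choose (k - length ps))"
proof -
  let ?V = "V - pair_elems ps" and ?k = "k - length ps"
  let ?N = "real (card ?V choose ?k)"
  have "ip V k (iter_swap_diff ps x) y = ip ?V ?k (iter_diff ps x) (iter_diff ps y)"
    using assms by (intro ip_iter_swap_diff) auto
  also have "\<dots> = (\<Sum>B\<in>ksub ?V ?k. (ip V k x (pair_phi V k ps) / ?N) * (ip V k y (pair_phi V k ps) / ?N))"
    unfolding ip_def[of ?V ?k]
    using iter_diff_level_space_eq[OF assms(1-5)] iter_diff_level_space_eq[OF assms(1-4,6)]
    by (intro sum.cong) auto
  also have "\<dots> = ?N * ((ip V k x (pair_phi V k ps) / ?N) * (ip V k y (pair_phi V k ps) / ?N))"
    using assms(1) by (simp add: card_ksub)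
  also have "\<dots> = ip V k x (pair_phi V k ps) * ip V k y (pair_phi V k ps) / ?N"
    using card_Diff_pair_elems[OF assms(1,3)] assms(2,4) by (simp add: field_simps power2_eq_square)
  finally show ?thesis .
qed

section \<open>Discrepancy\<close>

lemma Max_abs_image_eq_0_iff:
  assumes "finite P" "P \<noteq> {}"
  shows "Max ((\<lambda>p. \<bar>f p\<bar>) ` P) = 0 \<longleftrightarrow> (\<forall>p\<in>P. f p = (0 :: real))"
proof
  assume max: "Max ((\<lambda>p. \<bar>f p\<bar>) ` P) = 0"
  show "\<forall>p\<in>P. f p = 0"
  proof
    fix p assume "p \<in> P"
    then have "\<bar>f p\<bar> \<le> Max ((\<lambda>p. \<bar>f p\<bar>) ` P)" using assms(1) by (intro Max_ge) auto
    then show "f p = 0" using max by simp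
  qed
next
  assume "\<forall>p\<in>P. f p = 0"
  then have "(\<lambda>p. \<bar>f p\<bar>) ` P = {0}" using assms(2) by auto
  then show "Max ((\<lambda>p. \<bar>f p\<bar>) ` P) = 0" by simp
qed

lemma disc_eq_0_iff:
  assumes "finite V"
  shows "disc V k w u = 0 \<longleftrightarrow> (\<forall>\<pi>. \<pi> permutes V \<longrightarrow>
    ip V k (wperm \<pi> w) u = dens V k w * dens V k u * real (card V choose k))"
proof -
  have "{\<pi>. \<pi> permutes V} \<noteq> {}" using permutes_id by blast
  then show ?thesis
    unfolding disc_def by (subst Max_abs_image_eq_0_iff[OF finite_permutations[OF assms]]) auto
qed

lemma disc_eq_0_iff_orth_orbit:
  assumes "finite V" "wsum V k f = 0" "w \<in> WS V k"
  shows "disc V k w f = 0 \<longleftrightarrow> w \<in> orth V k (wspan {wperm \<pi> f | \<pi>. \<pi> permutes V})"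
proof -
  have "disc V k w f = 0 \<longleftrightarrow> (\<forall>\<pi>. \<pi> permutes V \<longrightarrow> ip V k w (wperm (inv \<pi>) f) = 0)"
    using assms(2) by (simp add: disc_eq_0_iff[OF assms(1)] dens_def ip_wperm)
  also have "\<dots> \<longleftrightarrow> (\<forall>g\<in>{wperm \<pi> f | \<pi>. \<pi> permutes V}. ip V k w g = 0)"
  proof
    assume orth: "\<forall>\<pi>. \<pi> permutes V \<longrightarrow> ip V k w (wperm (inv \<pi>) f) = 0"
    show "\<forall>g\<in>{wperm \<pi> f | \<pi>. \<pi> permutes V}. ip V k w g = 0"
    proof clarify
      fix \<sigma> assume "\<sigma> permutes V"
      then show "ip V k w (wperm \<sigma> f) = 0"
        using orth permutes_inv permutes_inv_inv by metis
    qed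
  qed (auto intro: permutes_inv)
  also have "\<dots> \<longleftrightarrow> w \<in> orth V k (wspan {wperm \<pi> f | \<pi>. \<pi> permutes V})"
    using assms(3) by (simp add: orth_def wspan_def ip_orth_span_iff)
  finally show ?thesis .
qed

lemma disc_level_spaces_eq_0:
  assumes "finite V" "i \<le> k" "j \<le> k" "i \<noteq> j"
    and "u \<in> level_space V k i" "w \<in> level_space V k j"
  shows "disc V k u w = 0"
proof -
  have "wsum V k u = 0 \<or> wsum V k w = 0"
  proof (cases "i = 0")
    case True
    then have "1 \<le> j" using assms(4) by simp
    then show ?thesis using wsum_level_space_eq_0[OF assms(1) _ assms(3,6)] by simp
  next
    case False
    then show ?thesis using wsum_level_space_eq_0[OF assms(1) _ assms(2,5)] by simp
  qed
  then have "dens V k u * dens V k w = 0" by (auto simp: dens_def)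
  moreover have "ip V k (wperm \<pi> u) w = 0" if "\<pi> permutes V" for \<pi>
    using ip_level_space_eq_0[OF assms(1) level_space_wperm[OF that assms(5)] assms(6,4,2,3)] .
  ultimately show ?thesis by (simp add: disc_eq_0_iff[OF assms(1)])
qed

lemma unique_level_decomposition:
  assumes "finite V" "2 * k \<le> card V" "w \<in> WS V k"
  shows "\<exists>!u. (\<forall>i\<le>k. u i \<in> level_space V k i) \<and> (\<forall>i>k. u i = 0) \<and> w = (\<Sum>i\<le>k. u i)"
proof -
  obtain u where u: "\<forall>h\<le>k. u h \<in> level_space V k h" "w = (\<Sum>h\<le>k. u h)"
    using exists_level_decomposition[OF assms] by blast
  define u' where "u' h = (if h \<le> k then u h else 0)" for h
  show ?thesis
  proof (rule ex1I[of _ u'])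
    show "(\<forall>i\<le>k. u' i \<in> level_space V k i) \<and> (\<forall>i>k. u' i = 0) \<and> w = (\<Sum>i\<le>k. u' i)"
      using u by (simp add: u'_def)
  next
    fix v assume v: "(\<forall>i\<le>k. v i \<in> level_space V k i) \<and> (\<forall>i>k. v i = 0) \<and> w = (\<Sum>i\<le>k. v i)"
    have "\<forall>h\<le>k. v h - u' h \<in> level_space V k h"
      using v u by (simp add: u'_def weighting.subspace_diff[OF level_space_subspace])
    moreover have "(\<Sum>h\<le>k. v h - u' h) = 0"
      using v u by (simp add: u'_def sum_subtractf)
    ultimately have "v h - u' h = 0" if "h \<le> k" for h
      using level_sum_eq_0[OF assms(1), of k "\<lambda>h. v h - u' h" h] that by blast
    then show "v = u'" using v by (auto simp: u'_def fun_eq_iff)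
  qed
qed

lemma Wv_level_sum_eq_0_iff:
  assumes "finite V" "2 * k \<le> card V" "\<forall>h\<le>k. u h \<in> level_space V k h" "i \<le> k"
  shows "Wv k V (\<Sum>h\<le>k. u h) i = 0 \<longleftrightarrow> u i = 0"
proof -
  have "ip V k (\<Sum>h\<le>k. u h) (pair_phi V k ps) = ip V k (u i) (pair_phi V k ps)"
    if "distinct_pairs V ps" "length ps = i" for ps
    using ip_level_sum[OF assms(1,3) pair_phi_level_space[OF that(1)]] that(2) assms(4) by simp
  then have "Wv k V (\<Sum>h\<le>k. u h) i = 0 \<longleftrightarrow>
      (\<forall>ps. distinct_pairs V ps \<and> length ps = i \<longrightarrow> ip V k (u i) (pair_phi V k ps) = 0)"
    using Wv_eq_0_iff[OF assms(1,2,4)] by auto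
  also have "\<dots> \<longleftrightarrow> u i = 0"
    using level_space_eq_0[OF assms(1)] assms(3,4) by auto
  finally show ?thesis .
qed

section \<open>Weightings with vanishing discrepancy\<close>

text \<open>Suppose H is the highest level at which both level components are nonzero. Antisymmetrising
  a permuted copy of the first weighting along H pairs kills every level below H, and the levels
  above H do not meet; since the discrepancy vanishes the result is orthogonal to the second
  weighting, which leaves only the product of the two H-level coefficients.\<close>

lemma ip_top_level_product_eq_0:
  assumes "finite V" "2 * k \<le> card V"
    and U: "\<forall>h\<le>k. U h \<in> level_space V k h" and U': "\<forall>h\<le>k. U' h \<in> level_space V k h"
    and const: "\<And>\<pi>. \<pi> permutes V \<Longrightarrow> ip V k (wperm \<pi> (\<Sum>h\<le>k. U h)) (\<Sum>h\<le>k. U' h) = C"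
    and H: "1 \<le> H" "H \<le> k" and above: "\<And>h. H < h \<Longrightarrow> h \<le> k \<Longrightarrow> U h = 0 \<or> U' h = 0"
    and \<pi>: "\<pi> permutes V" and ps: "distinct_pairs V ps" "length ps = H"
  shows "ip V k (wperm \<pi> (U H)) (pair_phi V k ps) * ip V k (U' H) (pair_phi V k ps) = 0"
proof -
  define X where "X h = iter_swap_diff ps (wperm \<pi> (U h))" for h
  have X: "X h \<in> level_space V k h" if "h \<le> k" for h
    unfolding X_def using U that distinct_pairs_subset[OF ps(1)]
    by (intro iter_swap_diff_level_space level_space_wperm[OF \<pi>]) auto
  have "ps \<noteq> []" using ps(2) H(1) by auto
  then have "0 = ip V k (iter_swap_diff ps (wperm \<pi> (\<Sum>h\<le>k. U h))) (\<Sum>h\<le>k. U' h)"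
    using ip_iter_swap_diff_wperm[OF distinct_pairs_subset[OF ps(1)] _ \<pi> const] by simp
  also have "iter_swap_diff ps (wperm \<pi> (\<Sum>h\<le>k. U h)) = (\<Sum>h\<le>k. X h)"
    unfolding X_def by (simp only: module_hom.sum[OF linear_wperm] module_hom.sum[OF linear_iter_swap_diff])
  also have "ip V k (\<Sum>h\<le>k. X h) (\<Sum>h\<le>k. U' h) = (\<Sum>h\<le>k. ip V k (X h) (U' h))"
  proof -
    have "ip V k (X h) (\<Sum>h\<le>k. U' h) = ip V k (X h) (U' h)" if "h \<le> k" for h
      using ip_level_sum[OF assms(1) U' X[OF that] that] by (simp add: ip_comm)
    then show ?thesis by (simp add: ip_sum_left)
  qed
  also have "\<dots> = ip V k (X H) (U' H)"
  proof -
    have "ip V k (X h) (U' h) = 0" if h: "h \<in> {..k} - {H}" for h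
    proof (cases "h < H")
      case True
      then show ?thesis
        unfolding X_def using assms(1,2) ps H(2) U h level_space_wperm[OF \<pi>]
        by (intro ip_iter_swap_diff_level_less) auto
    next
      case False
      then have "U h = 0 \<or> U' h = 0" using above h by auto
      then show ?thesis
        by (auto simp: X_def module_hom.zero[OF linear_wperm] module_hom.zero[OF linear_iter_swap_diff])
    qed
    then show ?thesis
      using H(2) sum.remove[of "{..k}" H "\<lambda>h. ip V k (X h) (U' h)"] by simp
  qed
  also have "\<dots> = ip V k (wperm \<pi> (U H)) (pair_phi V k ps) * ip V k (U' H) (pair_phi V k ps)
      / real (card (V - pair_elems ps) choose (k - length ps))"
    unfolding X_def using ps H(2) U U' level_space_wperm[OF \<pi>]
    by (intro ip_iter_swap_diff_level_eq[OF assms(1,2) ps(1)]) auto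
  moreover have "\<not> card V - 2 * H < k - H" using assms(2) H(2) by linarith
  ultimately show ?thesis
    using card_Diff_pair_elems[OF assms(1) ps(1)] ps(2) by simp
qed

lemma level_space_eq_0_if_products_eq_0:
  assumes "finite V" "u \<in> level_space V k h" "v \<in> level_space V k h" "u \<noteq> 0"
    and prod: "\<And>\<pi> ps. \<pi> permutes V \<Longrightarrow> distinct_pairs V ps \<Longrightarrow> length ps = h \<Longrightarrow>
      ip V k (wperm \<pi> u) (pair_phi V k ps) * ip V k v (pair_phi V k ps) = 0"
  shows "v = 0"
proof (rule level_space_eq_0[OF assms(1,3)])
  obtain qs where qs: "distinct_pairs V qs" "length qs = h" "ip V k u (pair_phi V k qs) \<noteq> 0"
    using level_space_eq_0[OF assms(1,2)] assms(4) by blast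
  fix ps assume ps: "distinct_pairs V ps" "length ps = h"
  obtain \<sigma> where \<sigma>: "\<sigma> permutes V" "map (map_prod \<sigma> \<sigma>) ps = qs"
    using exists_permutes_map_pairs[OF ps(1) qs(1)] ps(2) qs(2) by auto
  have "ip V k (wperm (inv \<sigma>) u) (pair_phi V k ps) = ip V k u (pair_phi V k qs)"
    using \<sigma> by (simp add: ip_wperm permutes_inv permutes_inv_inv wperm_pair_phi)
  then show "ip V k v (pair_phi V k ps) = 0"
    using prod[OF permutes_inv[OF \<sigma>(1)] ps] qs(3) by simp
qed

lemma disc_eq_0_level_components:
  assumes "finite V" "2 * k \<le> card V" "disc V k (\<Sum>h\<le>k. U h) (\<Sum>h\<le>k. U' h) = 0"
    and U: "\<forall>h\<le>k. U h \<in> level_space V k h" and U': "\<forall>h\<le>k. U' h \<in> level_space V k h"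
    and "h \<in> {1..k}"
  shows "U h = 0 \<or> U' h = 0"
proof (rule ccontr)
  define S where "S = {h \<in> {1..k}. U h \<noteq> 0 \<and> U' h \<noteq> 0}"
  assume "\<not> (U h = 0 \<or> U' h = 0)"
  with assms(6) have "S \<noteq> {}" by (auto simp: S_def)
  define H where "H = Max S"
  have "finite S" by (simp add: S_def)
  then have "H \<in> S" using Max_in[OF _ \<open>S \<noteq> {}\<close>] by (simp add: H_def)
  then have H: "1 \<le> H" "H \<le> k" "U H \<noteq> 0" "U' H \<noteq> 0" by (auto simp: S_def)
  have above: "U h = 0 \<or> U' h = 0" if "H < h" "h \<le> k" for h
  proof (rule ccontr)
    assume "\<not> (U h = 0 \<or> U' h = 0)"
    then have "h \<in> S" using that H(1) by (auto simp: S_def)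
    then have "h \<le> H" using Max_ge[OF \<open>finite S\<close>] by (simp add: H_def)
    with that show False by simp
  qed
  have "U' H = 0"
  proof (rule level_space_eq_0_if_products_eq_0[OF assms(1)])
    show "U H \<in> level_space V k H" "U' H \<in> level_space V k H" using U U' H(2) by auto
    show "U H \<noteq> 0" by (fact H(3))
    fix \<pi> ps assume "\<pi> permutes V" "distinct_pairs V ps" "length ps = H"
    then show "ip V k (wperm \<pi> (U H)) (pair_phi V k ps) * ip V k (U' H) (pair_phi V k ps) = 0"
      using assms(3) H(1,2) above
      by (intro ip_top_level_product_eq_0[OF assms(1,2) U U']) (auto simp: disc_eq_0_iff[OF assms(1)])
  qed
  with H(4) show False by contradiction
qed

lemma exists_partition_covering:
  fixes t :: nat
  assumes "1 \<le> t"
    and excl: "\<And>i j h. i \<in> {1..t} \<Longrightarrow> j \<in> {1..t} \<Longrightarrow> i \<noteq> j \<Longrightarrow> h \<in> H \<Longrightarrow> \<not> (P i h \<and> P j h)"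
  shows "\<exists>I. (\<Union>i\<in>{1..t}. I i) = H \<and> (\<forall>i\<in>{1..t}. \<forall>j\<in>{1..t}. i \<noteq> j \<longrightarrow> I i \<inter> I j = {})
    \<and> (\<forall>i\<in>{1..t}. \<forall>h\<in>H. P i h \<longrightarrow> h \<in> I i)"
proof -
  define I where "I i = (if i = 1 then {h \<in> H. \<forall>j\<in>{2..t}. \<not> P j h} else {h \<in> H. P i h})" for i
  have cover: "h \<in> (\<Union>i\<in>{1..t}. I i)" if "h \<in> H" for h
  proof (cases "\<exists>j\<in>{2..t}. P j h")
    case True
    then obtain j where "j \<in> {2..t}" "P j h" by blast
    with that show ?thesis by (intro UN_I[of j]) (auto simp: I_def)
  next
    case False
    with that assms(1) show ?thesis by (intro UN_I[of 1]) (auto simp: I_def)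
  qed
  have "I i \<subseteq> H" for i by (auto simp: I_def)
  with cover have "(\<Union>i\<in>{1..t}. I i) = H" by blast
  moreover have "\<forall>i\<in>{1..t}. \<forall>j\<in>{1..t}. i \<noteq> j \<longrightarrow> I i \<inter> I j = {}"
  proof (intro ballI impI equals0I)
    fix i j h assume ij: "i \<in> {1..t}" "j \<in> {1..t}" "i \<noteq> j" and h: "h \<in> I i \<inter> I j"
    consider "i = 1" | "j = 1" | "i \<noteq> 1" "j \<noteq> 1" by blast
    then show False
    proof cases
      case 1
      then have "j \<in> {2..t}" "P j h" "\<not> P j h" using ij h by (auto simp: I_def)
      then show False by simp
    next
      case 2
      then have "i \<in> {2..t}" "P i h" "\<not> P i h" using ij h by (auto simp: I_def)
      then show False by simp
    next
      case 3
      then have "h \<in> H" "P i h" "P j h" using h by (auto simp: I_def)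
      then show False using excl[OF ij] by blast
    qed
  qed
  moreover have "\<forall>i\<in>{1..t}. \<forall>h\<in>H. P i h \<longrightarrow> h \<in> I i"
  proof (intro ballI impI)
    fix i h assume i: "i \<in> {1..t}" and h: "h \<in> H" "P i h"
    show "h \<in> I i"
    proof (cases "i = 1")
      case True
      have "\<not> P j h" if "j \<in> {2..t}" for j
        using excl[of i j h] i h that True by auto
      then show ?thesis using True h(1) by (simp add: I_def)
    next
      case False
      then show ?thesis using h by (simp add: I_def)
    qed
  qed
  ultimately show ?thesis by (intro exI[of _ I] conjI)
qed

lemma sum_atMost_eq_sum_insert_0:
  fixes k :: nat
  assumes "I \<subseteq> {1..k}" "\<And>h. h \<in> {1..k} \<Longrightarrow> h \<notin> I \<Longrightarrow> f h = 0"
  shows "(\<Sum>h\<le>k. f h) = (\<Sum>h\<in>insert 0 I. f h)"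
proof (rule sum.mono_neutral_right)
  show "\<forall>h\<in>{..k} - insert 0 I. f h = 0"
  proof
    fix h assume "h \<in> {..k} - insert 0 I"
    then have "h \<in> {1..k}" "h \<notin> I" by auto
    then show "f h = 0" by (rule assms(2))
  qed
qed (use assms(1) in auto)

lemma disc_eq_0_exists_level_partition:
  fixes t :: nat
  assumes "finite V" "2 * k \<le> card V" "1 \<le> t" "\<forall>i\<in>{1..t}. w i \<in> WS V k"
    and disc: "\<forall>i\<in>{1..t}. \<forall>j\<in>{1..t}. i \<noteq> j \<longrightarrow> disc V k (w i) (w j) = 0"
  shows "\<exists>I U. (\<Union>i\<in>{1..t}. I i) = {1..k} \<and> (\<forall>i\<in>{1..t}. \<forall>j\<in>{1..t}. i \<noteq> j \<longrightarrow> I i \<inter> I j = {})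
    \<and> (\<forall>i\<in>{1..t}. (\<forall>h\<in>insert 0 (I i). U i h \<in> level_space V k h) \<and> w i = (\<Sum>h\<in>insert 0 (I i). U i h))"
proof -
  have "\<forall>i\<in>{1..t}. \<exists>u. (\<forall>h\<le>k. u h \<in> level_space V k h) \<and> w i = (\<Sum>h\<le>k. u h)"
    using exists_level_decomposition[OF assms(1,2)] assms(4) by blast
  from bchoice[OF this] obtain U
    where "\<forall>i\<in>{1..t}. (\<forall>h\<le>k. U i h \<in> level_space V k h) \<and> w i = (\<Sum>h\<le>k. U i h)"
    by blast
  then have U: "(\<forall>h\<le>k. U i h \<in> level_space V k h) \<and> w i = (\<Sum>h\<le>k. U i h)" if "i \<in> {1..t}" for i
    using that by blast
  have excl: "\<not> (U i h \<noteq> 0 \<and> U j h \<noteq> 0)" if "i \<in> {1..t}" "j \<in> {1..t}" "i \<noteq> j" "h \<in> {1..k}" for i j h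
  proof -
    have "disc V k (w i) (w j) = 0" using disc that by blast
    then have "disc V k (\<Sum>h\<le>k. U i h) (\<Sum>h\<le>k. U j h) = 0"
      using U[OF that(1)] U[OF that(2)] by simp
    from disc_eq_0_level_components[OF assms(1,2) this conjunct1[OF U[OF that(1)]]
        conjunct1[OF U[OF that(2)]] that(4)]
    show ?thesis by simp
  qed
  have "\<exists>I. (\<Union>i\<in>{1..t}. I i) = {1..k} \<and> (\<forall>i\<in>{1..t}. \<forall>j\<in>{1..t}. i \<noteq> j \<longrightarrow> I i \<inter> I j = {})
      \<and> (\<forall>i\<in>{1..t}. \<forall>h\<in>{1..k}. U i h \<noteq> 0 \<longrightarrow> h \<in> I i)"
    by (rule exists_partition_covering[where P = "\<lambda>i h. U i h \<noteq> 0" and H = "{1..k}", OF assms(3) excl])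
  then obtain I where I: "(\<Union>i\<in>{1..t}. I i) = {1..k}"
    "\<forall>i\<in>{1..t}. \<forall>j\<in>{1..t}. i \<noteq> j \<longrightarrow> I i \<inter> I j = {}"
    "\<forall>i\<in>{1..t}. \<forall>h\<in>{1..k}. U i h \<noteq> 0 \<longrightarrow> h \<in> I i"
    by blast
  have decomp: "(\<forall>h\<in>insert 0 (I i). U i h \<in> level_space V k h) \<and> w i = (\<Sum>h\<in>insert 0 (I i). U i h)"
    if i: "i \<in> {1..t}" for i
  proof
    have sub: "I i \<subseteq> {1..k}" using I(1) i by blast
    then show "\<forall>h\<in>insert 0 (I i). U i h \<in> level_space V k h" using U[OF i] by auto
    have "w i = (\<Sum>h\<le>k. U i h)" using U[OF i] by blast
    also have "\<dots> = (\<Sum>h\<in>insert 0 (I i). U i h)"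
      using I(3) i by (intro sum_atMost_eq_sum_insert_0[OF sub]) blast
    finally show "w i = (\<Sum>h\<in>insert 0 (I i). U i h)" .
  qed
  show ?thesis by (intro exI[of _ I] exI[of _ U] conjI I(1) I(2) ballI decomp)
qed

section \<open>The weightings \<open>\<phi>\<^sub>i\<close>\<close>

definition prefix_pairs :: "(nat \<Rightarrow> 'a) \<Rightarrow> (nat \<Rightarrow> 'a) \<Rightarrow> nat \<Rightarrow> ('a \<times> 'a) list" where
  "prefix_pairs x y i = map (\<lambda>j. (x j, y j)) [1..<Suc i]"

lemma prefix_pairs_0 [simp]: "prefix_pairs x y 0 = []"
  by (simp add: prefix_pairs_def)

lemma prefix_pairs_Suc: "prefix_pairs x y (Suc i) = prefix_pairs x y i @ [(x (Suc i), y (Suc i))]"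
  by (simp add: prefix_pairs_def)

lemma length_prefix_pairs [simp]: "length (prefix_pairs x y i) = i"
  by (simp add: prefix_pairs_def)

lemma pair_sign_append: "pair_sign (ps @ qs) A = pair_sign ps A * pair_sign qs A"
  by (induction ps rule: flat_pairs.induct) auto

lemma pair_elems_map: "pair_elems (map (\<lambda>j. (x j, y j)) js) = x ` set js \<union> y ` set js"
  by (induction js) auto

lemma pair_elems_prefix_pairs: "pair_elems (prefix_pairs x y i) = x ` {1..i} \<union> y ` {1..i}"
  by (simp only: prefix_pairs_def pair_elems_map set_upt atLeastLessThanSuc_atLeastAtMost)

locale pair_sequence =
  fixes V :: "'a set" and k :: nat and x y :: "nat \<Rightarrow> 'a"
  assumes finite_V: "finite V" and card_V: "2 * k \<le> card V"
    and x_in_V: "x ` {1..k} \<subseteq> V" and y_in_V: "y ` {1..k} \<subseteq> V"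
    and inj_x: "inj_on x {1..k}" and inj_y: "inj_on y {1..k}"
    and disjoint_xy: "x ` {1..k} \<inter> y ` {1..k} = {}"
begin

lemma prefix_pairs_fresh_Suc:
  assumes "Suc i \<le> k"
  shows "x (Suc i) \<notin> x ` {1..i} \<union> y ` {1..i}" "y (Suc i) \<notin> x ` {1..i} \<union> y ` {1..i}"
    "x (Suc i) \<noteq> y (Suc i)"
proof -
  have sub: "{1..i} \<subseteq> {1..k}" and mem: "Suc i \<in> {1..k}" "Suc i \<notin> {1..i}"
    using assms by auto
  have "x (Suc i) \<notin> x ` {1..i}" "y (Suc i) \<notin> y ` {1..i}"
    using inj_on_image_mem_iff[OF inj_x mem(1) sub] inj_on_image_mem_iff[OF inj_y mem(1) sub] mem(2)
    by simp_all
  moreover have "x (Suc i) \<notin> y ` {1..i}" "y (Suc i) \<notin> x ` {1..i}" "x (Suc i) \<noteq> y (Suc i)"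
    using disjoint_xy mem(1) image_mono[OF sub, of x] image_mono[OF sub, of y] by blast+
  ultimately show "x (Suc i) \<notin> x ` {1..i} \<union> y ` {1..i}" "y (Suc i) \<notin> x ` {1..i} \<union> y ` {1..i}"
    "x (Suc i) \<noteq> y (Suc i)"
    by auto
qed

lemma distinct_pairs_prefix_pairs: "i \<le> k \<Longrightarrow> distinct_pairs V (prefix_pairs x y i)"
proof (induction i)
  case (Suc i)
  have "distinct_pairs (V - pair_elems (prefix_pairs x y i)) [(x (Suc i), y (Suc i))]"
    using prefix_pairs_fresh_Suc[OF Suc.prems] x_in_V y_in_V Suc.prems
    by (auto simp: distinct_pairs_Cons pair_elems_prefix_pairs)
  then show ?case using Suc by (simp add: prefix_pairs_Suc distinct_pairs_append)
qed simp

lemma pair_sign_prefix_pairs: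
  assumes "i \<le> k"
  shows "pair_sign (prefix_pairs x y i) A =
    (if \<forall>j\<in>{1..i}. card (A \<inter> {x j, y j}) = 1 then (-1) ^ card (A \<inter> y ` {1..i}) else 0)"
  using assms
proof (induction i)
  case (Suc i)
  let ?a = "x (Suc i)" and ?b = "y (Suc i)"
  have ab: "?a \<noteq> ?b" "?b \<notin> y ` {1..i}" using prefix_pairs_fresh_Suc[OF Suc.prems] by auto
  have all: "(\<forall>j\<in>{1..Suc i}. card (A \<inter> {x j, y j}) = 1) \<longleftrightarrow>
      (\<forall>j\<in>{1..i}. card (A \<inter> {x j, y j}) = 1) \<and> card (A \<inter> {?a, ?b}) = 1"
    by (auto simp: atLeastAtMostSuc_conv)
  have "y ` {1..Suc i} = insert ?b (y ` {1..i})" by (auto simp: atLeastAtMostSuc_conv)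
  then have count: "card (A \<inter> y ` {1..Suc i}) = card (A \<inter> y ` {1..i}) + (if ?b \<in> A then 1 else 0)"
    using ab(2) by (auto simp: Int_insert_left)
  have last: "pair_sign (prefix_pairs x y (Suc i)) A
      = pair_sign (prefix_pairs x y i) A * (indicator A ?a - indicator A ?b)"
    by (simp add: prefix_pairs_Suc pair_sign_append)
  show ?case
  proof (cases "\<forall>j\<in>{1..i}. card (A \<inter> {x j, y j}) = 1")
    case False
    have "i \<le> k" using Suc.prems by simp
    from Suc.IH[OF this] False have "pair_sign (prefix_pairs x y i) A = 0"
      by (simp only: if_False)
    moreover have "\<not> (\<forall>j\<in>{1..Suc i}. card (A \<inter> {x j, y j}) = 1)" using False all by blast
    ultimately show ?thesis by (simp only: if_not_P last mult_zero_left if_False)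
  next
    case True
    then have IH: "pair_sign (prefix_pairs x y i) A = (-1) ^ card (A \<inter> y ` {1..i})"
      using Suc by simp
    consider "?a \<in> A" "?b \<notin> A" | "?b \<in> A" "?a \<notin> A" | "?a \<in> A" "?b \<in> A" | "?a \<notin> A" "?b \<notin> A"
      by blast
    then show ?thesis
    proof cases
      case 1
      then have "A \<inter> {?a, ?b} = {?a}" by auto
      then show ?thesis using 1 True all last IH count by simp
    next
      case 2
      then have "A \<inter> {?a, ?b} = {?b}" by auto
      then show ?thesis using 2 True all last IH count by simp
    next
      case 3
      then have "A \<inter> {?a, ?b} = {?a, ?b}" by auto
      then show ?thesis using 3 True all last ab(1) by simp
    next
      case 4
      then have "A \<inter> {?a, ?b} = {}" by auto
      then show ?thesis using 4 True all last by simp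
    qed
  qed
qed simp

lemma phi_eq_pair_phi: "i \<le> k \<Longrightarrow> phi V k x y i = pair_phi V k (prefix_pairs x y i)"
  by (simp add: phi_def pair_phi_def pair_sign_prefix_pairs fun_eq_iff)

lemma orbit_phi_eq_pair_phis:
  assumes "i \<le> k"
  shows "{wperm \<pi> (phi V k x y i) | \<pi>. \<pi> permutes V} = pair_phis V k i"
proof
  show "{wperm \<pi> (phi V k x y i) | \<pi>. \<pi> permutes V} \<subseteq> pair_phis V k i"
  proof clarify
    fix \<pi> assume \<pi>: "\<pi> permutes V"
    have "distinct_pairs V (map (map_prod \<pi> \<pi>) (prefix_pairs x y i))"
      by (rule distinct_pairs_map[OF \<pi> distinct_pairs_prefix_pairs[OF assms]])
    then show "wperm \<pi> (phi V k x y i) \<in> pair_phis V k i"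
      unfolding pair_phis_def phi_eq_pair_phi[OF assms] wperm_pair_phi[OF \<pi>] by auto
  qed
  show "pair_phis V k i \<subseteq> {wperm \<pi> (phi V k x y i) | \<pi>. \<pi> permutes V}"
  proof
    fix g assume "g \<in> pair_phis V k i"
    then obtain ps where ps: "g = pair_phi V k ps" "distinct_pairs V ps" "length ps = i"
      by (auto simp: pair_phis_def)
    obtain \<pi> where "\<pi> permutes V" "map (map_prod \<pi> \<pi>) (prefix_pairs x y i) = ps"
      using exists_permutes_map_pairs[OF distinct_pairs_prefix_pairs[OF assms] ps(2)] ps(3) by auto
    then have "g = wperm \<pi> (phi V k x y i)"
      using ps(1) by (simp add: phi_eq_pair_phi[OF assms] wperm_pair_phi)
    with \<open>\<pi> permutes V\<close> show "g \<in> {wperm \<pi> (phi V k x y i) | \<pi>. \<pi> permutes V}" by blast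
  qed
qed

lemma Vsp_eq_level_space: "i \<le> k \<Longrightarrow> Vsp V k x y i = level_space V k i"
  by (simp add: Vsp_def orbit_phi_eq_pair_phis wspan_def level_space_def)

lemma disc_phi_eq_0_iff:
  "\<forall>i\<in>{1..k}. \<forall>w\<in>WS V k. disc V k w (phi V k x y i) = 0 \<longleftrightarrow> w \<in> orth V k (Vsp V k x y i)"
proof (intro ballI)
  fix i w assume i: "i \<in> {1..k}" and w: "w \<in> WS V k"
  have "1 \<le> i" "i \<le> k" using i by auto
  then have "wsum V k (phi V k x y i) = 0"
    using wsum_level_space_eq_0[OF finite_V _ _ pair_phi_level_space[OF distinct_pairs_prefix_pairs]]
    by (simp add: phi_eq_pair_phi)
  then show "disc V k w (phi V k x y i) = 0 \<longleftrightarrow> w \<in> orth V k (Vsp V k x y i)"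
    using disc_eq_0_iff_orth_orbit[OF finite_V _ w] by (simp add: Vsp_def)
qed

lemma disc_Vsp_eq_0:
  "\<forall>i\<le>k. \<forall>j\<le>k. i \<noteq> j \<longrightarrow> (\<forall>u\<in>Vsp V k x y i. \<forall>w\<in>Vsp V k x y j. disc V k u w = 0)"
  using disc_level_spaces_eq_0[OF finite_V] by (simp add: Vsp_eq_level_space)

lemma unique_Vsp_decomposition:
  "\<forall>w\<in>WS V k. \<exists>!u. (\<forall>i\<le>k. u i \<in> Vsp V k x y i) \<and> (\<forall>i>k. u i = 0) \<and> w = (\<Sum>i\<le>k. u i)"
  using unique_level_decomposition[OF finite_V card_V] by (simp add: Vsp_eq_level_space)

lemma Wv_Vsp_sum_eq_0_iff:
  "\<forall>u. (\<forall>i\<le>k. u i \<in> Vsp V k x y i) \<longrightarrow> (\<forall>i\<le>k. Wv k V (\<Sum>h\<le>k. u h) i = 0 \<longleftrightarrow> u i = 0)"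
  using Wv_level_sum_eq_0_iff[OF finite_V card_V] by (simp add: Vsp_eq_level_space)

lemma disc_eq_0_imp_Vsum_partition:
  fixes t :: nat
  assumes "1 \<le> t" "\<forall>i\<in>{1..t}. w i \<in> WS V k"
    and "\<forall>i\<in>{1..t}. \<forall>j\<in>{1..t}. i \<noteq> j \<longrightarrow> disc V k (w i) (w j) = 0"
  shows "\<exists>I. (\<Union>i\<in>{1..t}. I i) = {1..k} \<and> (\<forall>i\<in>{1..t}. \<forall>j\<in>{1..t}. i \<noteq> j \<longrightarrow> I i \<inter> I j = {})
    \<and> (\<forall>i\<in>{1..t}. w i \<in> Vsum V k x y (insert 0 (I i)))"
proof -
  obtain I U where I: "(\<Union>i\<in>{1..t}. I i) = {1..k}"
      "\<forall>i\<in>{1..t}. \<forall>j\<in>{1..t}. i \<noteq> j \<longrightarrow> I i \<inter> I j = {}"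
    and U: "\<forall>i\<in>{1..t}. (\<forall>h\<in>insert 0 (I i). U i h \<in> level_space V k h)
      \<and> w i = (\<Sum>h\<in>insert 0 (I i). U i h)"
    using disc_eq_0_exists_level_partition[OF finite_V card_V assms] by blast
  have "w i \<in> Vsum V k x y (insert 0 (I i))" if i: "i \<in> {1..t}" for i
  proof -
    have "insert 0 (I i) \<subseteq> {..k}" using I(1) i by auto
    then have "\<forall>h\<in>insert 0 (I i). U i h \<in> Vsp V k x y h"
      using U i by (auto simp: Vsp_eq_level_space)
    then show ?thesis using U i unfolding Vsum_def by blast
  qed
  then show ?thesis by (intro exI[of _ I] conjI I(1) I(2) ballI)
qed

end

theorem theorem6p1:
  fixes V :: "'a set" and n k :: nat and x y :: "nat \<Rightarrow> 'a"
  assumes "finite V" and "card V = n" and "1 \<le> k" and "2 * k \<le> n"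
    and "x ` {1..k} \<subseteq> V" and "y ` {1..k} \<subseteq> V"
    and "inj_on x {1..k}" and "inj_on y {1..k}"
    and "x ` {1..k} \<inter> y ` {1..k} = {}"
  shows
    "(\<forall>i\<in>{1..k}. \<forall>w\<in>WS V k.
        disc V k w (phi V k x y i) = 0 \<longleftrightarrow> w \<in> orth V k (Vsp V k x y i))
   \<and> (\<forall>i\<le>k. \<forall>j\<le>k. i \<noteq> j \<longrightarrow>
        (\<forall>u\<in>Vsp V k x y i. \<forall>w\<in>Vsp V k x y j. disc V k u w = 0))
   \<and> (\<forall>w\<in>WS V k. \<exists>!u::nat \<Rightarrow> 'a weighting.
        (\<forall>i\<le>k. u i \<in> Vsp V k x y i) \<and> (\<forall>i>k. u i = 0) \<and> w = (\<Sum>i\<le>k. u i))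
   \<and> (\<forall>u::nat \<Rightarrow> 'a weighting. (\<forall>i\<le>k. u i \<in> Vsp V k x y i) \<longrightarrow>
        (\<forall>i\<le>k. Wv k V (\<Sum>h\<le>k. u h) i = 0 \<longleftrightarrow> u i = 0))
   \<and> (\<forall>(t::nat) (w::nat \<Rightarrow> 'a weighting).
        1 \<le> t \<longrightarrow> (\<forall>i\<in>{1..t}. w i \<in> WS V k \<and> w i \<noteq> 0) \<longrightarrow>
        (\<forall>i\<in>{1..t}. \<forall>j\<in>{1..t}. i \<noteq> j \<longrightarrow> disc V k (w i) (w j) = 0) \<longrightarrow>
        (\<exists>I::nat \<Rightarrow> nat set.
           (\<Union>i\<in>{1..t}. I i) = {1..k}
         \<and> (\<forall>i\<in>{1..t}. \<forall>j\<in>{1..t}. i \<noteq> j \<longrightarrow> I i \<inter> I j = {})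
         \<and> (\<forall>i\<in>{1..t}. w i \<in> Vsum V k x y (insert 0 (I i)))))"
proof -
  interpret pair_sequence V k x y
    using assms by unfold_locales auto
  show ?thesis
    by (intro conjI disc_phi_eq_0_iff disc_Vsp_eq_0 unique_Vsp_decomposition Wv_Vsp_sum_eq_0_iff
        allI impI; rule disc_eq_0_imp_Vsum_partition) auto
qed

end
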